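(* Assume Assumption (I), and let $(L_k,u_k)$ be a sequence generated by Algorithm A. Let $\bar u\in V$ be the weak limit in $V$ of a subsequence of $(u_k)$. Then there exists $\bar\lambda\in V^*$ such that \[ \alpha\langle\bar u,v\rangle_V+\beta\langle\bar\lambda,v\rangle_{V^*,V}=-F'(\bar u)v\quad\forall v\in V, \qquad \langle\bar\lambda,\bar u\rangle_{V^*,V}\ge p\int_\Omega|\bar u|^p\,dx . \]
   Context: Standing assumptions: $\Omega\subset\mathbb R^d$ bounded Lipschitz domain; $V$ real Hilbert space with inner product $\langle\cdot,\cdot\rangle_V$, $V\subset L^2(\Omega)$ with compact and dense embedding; $V^*$ dual with pairing $\langle\cdot,\cdot\rangle_{V^*,V}$. $F:V\to\mathbb R$ weakly lower semicontinuous, bounded below by an affine function, continuously Fréchet differentiable. $\alpha>0$, $\beta>0$, $p\in(0,1)$. Assumption (I): the standing assumptions hold; $F'$ is completely continuous ($u_n\rightharpoonup u$ in $V$ implies $F'(u_n)\to F'(u)$ in $V^*$); and $F':V\to V^*$ is Lipschitz continuous on bounded sets. For $\epsilon>0$, $\psi_\epsilon(t)=\frac p2\frac{t}{\epsilon^{2-p}}+(1-\frac p2)\epsilon^p$ if $t\in[0,\epsilon^2)$, $\psi_\epsilon(t)=t^{p/2}$ if $t\ge\epsilon^2$, $\psi_\epsilon'(t)=\frac p2\min(\epsilon^{p-2},t^{(p-2)/2})$. Algorithm A: choose a monotonically decreasing sequence $\epsilon_k\searrow0$, constants $\gamma>1$, $\tilde L>0$, and $u_0\in V$. Given $u_k$,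 for $L\ge0$ let problem (Q$_{k,L}$) be $\min_{u\in V} F(u_k)+F'(u_k)(u-u_k)+\frac L2\|u-u_k\|_V^2+\frac\alpha2\|u\|_V^2+\beta\int_\Omega\big[\psi_{\epsilon_k}(u_k^2)+\psi_{\epsilon_k}'(u_k^2)(u^2-u_k^2)\big]dx$ (strongly convex, unique minimizer), and let (D$_{k,L}$) be the condition $F(u_{k+1})\le F(u_k)+F'(u_k)(u_{k+1}-u_k)+L\|u_{k+1}-u_k\|_V^2$ for its minimizer $u_{k+1}$. $L_k$ is the smallest $L\in\{0\}\cup\{\tilde L\gamma^l:l\ge0\}$ for which (D$_{k,L}$) holds, and $u_{k+1}$ is the corresponding minimizer; then $k\mapsto k+1$. *)

theory Defs
  imports "HOL-Analysis.Analysis"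
begin

text \<open>Coordinate-free: near every boundary point x there
  are a radius r > 0, a unit direction e and a Lipschitz function g on the hyperplane
  orthogonal to e such that, inside the ball, the set lies strictly below the graph of g.\<close>

definition lipschitz_domain :: "'d::euclidean_space set \<Rightarrow> bool" where
  "lipschitz_domain \<Omega> \<longleftrightarrow> open \<Omega> \<and> connected \<Omega> \<and> \<Omega> \<noteq> {} \<and>
     (\<forall>x\<in>frontier \<Omega>. \<exists>r>0. \<exists>e. norm e = 1 \<and> (\<exists>g M. lipschitz_on M {z. z \<bullet> e = 0} g \<and>
        (\<forall>y\<in>ball x r. y \<in> \<Omega> \<longleftrightarrow> y \<bullet> e < g (y - (y \<bullet> e) *\<^sub>R e))))"

text \<open>V is a real Hilbert space (type class real_inner + complete_space); the inclusion
  V into L^2(Omega) is the map iota, sending an element of V to a representative function.\<close>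

definition sq_integrable_on :: "'d::euclidean_space set \<Rightarrow> ('d \<Rightarrow> real) \<Rightarrow> bool" where
  "sq_integrable_on \<Omega> f \<longleftrightarrow> f \<in> borel_measurable (lebesgue_on \<Omega>) \<and>
     integrable (lebesgue_on \<Omega>) (\<lambda>x. (f x)\<^sup>2)"

definition L2dist2 :: "'d::euclidean_space set \<Rightarrow> ('d \<Rightarrow> real) \<Rightarrow> ('d \<Rightarrow> real) \<Rightarrow> real" where
  "L2dist2 \<Omega> f g = (LINT x|lebesgue_on \<Omega>. (f x - g x)\<^sup>2)"

definition compact_dense_embedding ::
    "'d::euclidean_space set \<Rightarrow> ('v::{real_inner,complete_space} \<Rightarrow> 'd \<Rightarrow> real) \<Rightarrow> bool" where
  "compact_dense_embedding \<Omega> \<iota> \<longleftrightarrow>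
     \<comment> \<open>linear map into L^2\<close>
     (\<forall>a b u w x. \<iota> (a *\<^sub>R u + b *\<^sub>R w) x = a * \<iota> u x + b * \<iota> w x) \<and>
     (\<forall>u. sq_integrable_on \<Omega> (\<iota> u)) \<and>
     \<comment> \<open>injective (V is a subspace of L^2)\<close>
     (\<forall>u. (AE x in lebesgue_on \<Omega>. \<iota> u x = 0) \<longrightarrow> u = 0) \<and>
     \<comment> \<open>continuous\<close>
     (\<exists>C. \<forall>u. L2dist2 \<Omega> (\<iota> u) (\<lambda>_. 0) \<le> C * (norm u)\<^sup>2) \<and>
     \<comment> \<open>compact: bounded sequences have L^2-convergent subsequences of images\<close>
     (\<forall>u::nat \<Rightarrow> 'v. bounded (range u) \<longrightarrow>
        (\<exists>r f. strict_mono r \<and> sq_integrable_on \<Omega> f \<and>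
           (\<lambda>n. L2dist2 \<Omega> (\<iota> (u (r n))) f) \<longlonglongrightarrow> 0)) \<and>
     \<comment> \<open>dense\<close>
     (\<forall>f. sq_integrable_on \<Omega> f \<longrightarrow> (\<forall>e>0. \<exists>v. L2dist2 \<Omega> (\<iota> v) f < e))"

definition weak_conv :: "(nat \<Rightarrow> 'v::real_inner) \<Rightarrow> 'v \<Rightarrow> bool" where
  "weak_conv u w \<longleftrightarrow> (\<forall>z. (\<lambda>n. inner (u n) z) \<longlonglongrightarrow> inner w z)"

definition weakly_lsc :: "('v::real_inner \<Rightarrow> real) \<Rightarrow> bool" where
  "weakly_lsc F \<longleftrightarrow> (\<forall>u w. weak_conv u w \<longrightarrow> ereal (F w) \<le> liminf (\<lambda>n. ereal (F (u n))))"

definition bounded_below_affine :: "('v::real_normed_vector \<Rightarrow> real) \<Rightarrow> bool" where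
  "bounded_below_affine F \<longleftrightarrow> (\<exists>l c. bounded_linear l \<and> (\<forall>u. l u + c \<le> F u))"

definition standing_F :: "('v::{real_inner,complete_space} \<Rightarrow> real) \<Rightarrow> ('v \<Rightarrow> ('v \<Rightarrow>\<^sub>L real)) \<Rightarrow> bool" where
  "standing_F F F' \<longleftrightarrow> weakly_lsc F \<and> bounded_below_affine F \<and>
     (\<forall>u. (F has_derivative blinfun_apply (F' u)) (at u)) \<and> continuous_on UNIV F'"

definition assumption_I_F :: "('v::{real_inner,complete_space} \<Rightarrow> real) \<Rightarrow> ('v \<Rightarrow> ('v \<Rightarrow>\<^sub>L real)) \<Rightarrow> bool" where
  "assumption_I_F F F' \<longleftrightarrow> standing_F F F' \<and>
     (\<forall>u w. weak_conv u w \<longrightarrow> (\<lambda>n. F' (u n)) \<longlonglongrightarrow> F' w) \<and>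
     (\<forall>B. bounded B \<longrightarrow> (\<exists>M. lipschitz_on M B F'))"

definition psi :: "real \<Rightarrow> real \<Rightarrow> real \<Rightarrow> real" where
  "psi p \<epsilon> t = (if t < \<epsilon>\<^sup>2 then p / 2 * t / \<epsilon> powr (2 - p) + (1 - p / 2) * \<epsilon> powr p
                  else t powr (p / 2))"

text \<open>psi' (t) = p/2 min(eps^(p-2), t^((p-2)/2)), written piecewise (for t >= 0 this is the
  same; it also gives the correct value eps^(p-2) at t = 0, where Isabelle's powr would
  give 0 powr ((p-2)/2) = 0).\<close>
definition dpsi :: "real \<Rightarrow> real \<Rightarrow> real \<Rightarrow> real" where
  "dpsi p \<epsilon> t = p / 2 * (if t < \<epsilon>\<^sup>2 then \<epsilon> powr (p - 2) else t powr ((p - 2) / 2))"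

definition Qobj ::
  "'d::euclidean_space set \<Rightarrow> ('v::{real_inner,complete_space} \<Rightarrow> 'd \<Rightarrow> real) \<Rightarrow>
   ('v \<Rightarrow> real) \<Rightarrow> ('v \<Rightarrow> ('v \<Rightarrow>\<^sub>L real)) \<Rightarrow> real \<Rightarrow> real \<Rightarrow> real \<Rightarrow>
   real \<Rightarrow> 'v \<Rightarrow> real \<Rightarrow> 'v \<Rightarrow> real" where
  "Qobj \<Omega> \<iota> F F' \<alpha> \<beta> p \<epsilon> uk L u =
     F uk + F' uk (u - uk) + L / 2 * (norm (u - uk))\<^sup>2 + \<alpha> / 2 * (norm u)\<^sup>2 +
     \<beta> * (LINT x|lebesgue_on \<Omega>. psi p \<epsilon> ((\<iota> uk x)\<^sup>2) +
                                  dpsi p \<epsilon> ((\<iota> uk x)\<^sup>2) * ((\<iota> u x)\<^sup>2 - (\<iota> uk x)\<^sup>2))"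

definition Dcond :: "('v::real_normed_vector \<Rightarrow> real) \<Rightarrow> ('v \<Rightarrow> ('v \<Rightarrow>\<^sub>L real)) \<Rightarrow>
    'v \<Rightarrow> real \<Rightarrow> 'v \<Rightarrow> bool" where
  "Dcond F F' uk L w \<longleftrightarrow> F w \<le> F uk + F' uk (w - uk) + L * (norm (w - uk))\<^sup>2"

definition Lset :: "real \<Rightarrow> real \<Rightarrow> real set" where
  "Lset Lt \<gamma> = {0} \<union> {Lt * \<gamma> ^ l | l. True}"

definition is_minimizer :: "('v \<Rightarrow> real) \<Rightarrow> 'v \<Rightarrow> bool" where
  "is_minimizer f w \<longleftrightarrow> (\<forall>u. f w \<le> f u)"

definition algorithmA ::
  "'d::euclidean_space set \<Rightarrow> ('v::{real_inner,complete_space} \<Rightarrow> 'd \<Rightarrow> real) \<Rightarrow>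
   ('v \<Rightarrow> real) \<Rightarrow> ('v \<Rightarrow> ('v \<Rightarrow>\<^sub>L real)) \<Rightarrow> real \<Rightarrow> real \<Rightarrow> real \<Rightarrow>
   (nat \<Rightarrow> real) \<Rightarrow> real \<Rightarrow> real \<Rightarrow> 'v \<Rightarrow> (nat \<Rightarrow> real) \<Rightarrow> (nat \<Rightarrow> 'v) \<Rightarrow> bool" where
  "algorithmA \<Omega> \<iota> F F' \<alpha> \<beta> p \<epsilon> \<gamma> Lt u0 L u \<longleftrightarrow>
     u 0 = u0 \<and>
     (\<forall>k. L k \<in> Lset Lt \<gamma> \<and>
          is_minimizer (Qobj \<Omega> \<iota> F F' \<alpha> \<beta> p (\<epsilon> k) (u k) (L k)) (u (Suc k)) \<and>
          Dcond F F' (u k) (L k) (u (Suc k)) \<and>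
          (\<forall>L'\<in>Lset Lt \<gamma>. L' < L k \<longrightarrow>
             (\<forall>w. is_minimizer (Qobj \<Omega> \<iota> F F' \<alpha> \<beta> p (\<epsilon> k) (u k) L') w \<longrightarrow>
                  \<not> Dcond F F' (u k) L' w)))"

end

theory Submission
  imports Defs
begin

text \<open>
  The iterates decrease the smoothed energy \<open>J\<^sub>\<epsilon>(u) = F(u) + \<alpha>/2 \<parallel>u\<parallel>\<^sup>2 + \<beta> \<integral> \<psi>\<^sub>\<epsilon>(u\<^sup>2)\<close>:
  the linearised \<open>\<psi>\<close>-term in (Q) majorises \<open>\<psi>\<^sub>\<epsilon>\<close> by concavity, condition (D) majorises \<open>F\<close>,
  and \<open>\<psi>\<^sub>\<epsilon>\<close> decreases with \<open>\<epsilon>\<close>. Hence the iterates are bounded, the steps are square summable,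
  and Lipschitz continuity of \<open>F'\<close> on bounded sets bounds the \<open>L\<^sub>k\<close>. Testing the optimality
  condition of (Q) with \<open>w = u (k+1)\<close> gives
  \<open>2\<beta> \<integral> \<psi>'\<^sub>\<epsilon>\<^sub>k(u\<^sub>k\<^sup>2) w\<^sup>2 = -F'(u\<^sub>k) w - L\<^sub>k \<langle>w - u\<^sub>k, w\<rangle> - \<alpha> \<parallel>w\<parallel>\<^sup>2\<close>.
  Along a subsequence on which both \<open>u k\<close> and \<open>u (k+1)\<close> converge almost everywhere (compactness
  of the embedding), the integrand tends to \<open>p |ubar|\<^sup>p\<close> wherever \<open>ubar \<noteq> 0\<close>, so Fatou's lemma,
  complete continuity of \<open>F'\<close> and weak lower semicontinuity of the norm give
  \<open>\<beta> p \<integral> |ubar|\<^sup>p \<le> -F'(ubar) ubar - \<alpha> \<parallel>ubar\<parallel>\<^sup>2\<close>. The multiplier is then read off from the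
  stationarity equation.
\<close>

section \<open>Quadratic functionals on Hilbert spaces\<close>

lemma quadratic_nonneg_discriminant:
  fixes a b c :: real
  assumes nonneg: "\<And>t. 0 \<le> a + 2 * b * t + c * t\<^sup>2" and c: "c \<ge> 0"
  shows "b\<^sup>2 \<le> a * c"
proof (cases "c = 0")
  case True
  have "b = 0"
  proof (rule ccontr)
    assume "b \<noteq> 0"
    have "0 \<le> a + 2 * b * (- (\<bar>a\<bar> + 1) / (2 * b))" using nonneg[of "- (\<bar>a\<bar> + 1) / (2 * b)"] True by simp
    also have "\<dots> = a - \<bar>a\<bar> - 1" using \<open>b \<noteq> 0\<close> by (simp add: field_simps)
    finally show False by linarith
  qed
  thus ?thesis using True by simp
next
  case False
  hence c: "c > 0" using c by simp
  have "0 \<le> a + 2 * b * (- b / c) + c * (- b / c)\<^sup>2" by (rule nonneg)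
  also have "\<dots> = a - b\<^sup>2 / c" using c by (simp add: field_simps power2_eq_square)
  finally show ?thesis using c by (simp add: field_simps)
qed

definition quadratic_expansion :: "('v::real_vector \<Rightarrow> real) \<Rightarrow> ('v \<Rightarrow> 'v \<Rightarrow> real) \<Rightarrow> ('v \<Rightarrow> real) \<Rightarrow> bool"
  where "quadratic_expansion G D R \<longleftrightarrow> (\<forall>w v t. G (w + t *\<^sub>R v) = G w + t * D w v + t\<^sup>2 * R v)"

lemma quadratic_expansionD:
  "quadratic_expansion G D R \<Longrightarrow> G (w + t *\<^sub>R v) = G w + t * D w v + t\<^sup>2 * R v"
  unfolding quadratic_expansion_def by blast

lemma power2_norm_add_scaleR: "(norm (x + t *\<^sub>R v))\<^sup>2 = (norm x)\<^sup>2 + 2 * t * inner x v + t\<^sup>2 * (norm v)\<^sup>2"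
  for x v :: "'a::real_inner"
  unfolding power2_norm_eq_inner by (simp add: inner_add_left inner_add_right inner_commute power2_eq_square algebra_simps)

lemma quadratic_expansion_minimizer:
  assumes G: "quadratic_expansion G D R" and min: "is_minimizer G w"
  shows "D w v = 0" and "G z = G w + R (z - w)"
proof -
  have step: "0 \<le> t * D w v + t\<^sup>2 * R v" for v t
    using min quadratic_expansionD[OF G, of w t v] unfolding is_minimizer_def by (metis le_add_same_cancel1 add.assoc)
  have "0 \<le> R v" for v using step[of 1 v] step[of "-1" v] by simp
  moreover have "0 \<le> 0 + 2 * (D w v / 2) * t + R v * t\<^sup>2" for v t using step[of t v] by (simp add: mult.commute)
  ultimately have D0: "D w v = 0" for v using quadratic_nonneg_discriminant[of 0 "D w v / 2" "R v"] by simp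
  thus "D w v = 0" .
  have "G z = G (w + 1 *\<^sub>R (z - w))" by simp
  also have "\<dots> = G w + R (z - w)" using quadratic_expansionD[OF G, of w 1 "z - w"] D0 by simp
  finally show "G z = G w + R (z - w)" .
qed

lemma quadratic_expansion_isCont:
  assumes G: "quadratic_expansion G D R"
    and R: "\<And>v. \<bar>R v\<bar> \<le> C * (norm v)\<^sup>2" and D: "\<And>v. \<bar>D y v\<bar> \<le> K * norm v"
  shows "isCont G y"
proof -
  have "G (y + h) - G y = D y h + R h" for h using quadratic_expansionD[OF G, of y 1 h] by simp
  hence bound: "norm (G (y + h) - G y) \<le> K * norm h + C * (norm h)\<^sup>2" for h
    using D[of h] R[of h] by simp
  have "(\<lambda>h. norm h) \<midarrow>0\<rightarrow> 0" by (rule tendsto_norm_zero[OF tendsto_ident_at])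
  hence "(\<lambda>h. K * norm h + C * (norm h)\<^sup>2) \<midarrow>0\<rightarrow> K * 0 + C * 0\<^sup>2"
    by (intro tendsto_add tendsto_mult tendsto_const tendsto_power)
  hence "(\<lambda>h. K * norm h + C * (norm h)\<^sup>2) \<midarrow>0\<rightarrow> 0" by simp
  hence "(\<lambda>h. G (y + h) - G y) \<midarrow>0\<rightarrow> 0" by (rule Lim_null_comparison[rotated]) (use bound in \<open>auto intro!: always_eventually\<close>)
  thus ?thesis unfolding isCont_iff by (simp add: LIM_zero_iff)
qed

lemma quadratic_expansion_minimizing_Cauchy:
  assumes G: "quadratic_expansion G D R"
    and R: "\<And>v. c * (norm v)\<^sup>2 \<le> R v" and c: "c > 0"
    and lower: "\<And>v. m \<le> G v" and x: "\<And>n. G (x n) < m + 1 / Suc n"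
  shows "Cauchy x"
proof (rule CauchyI)
  have key: "c/2 * (norm (x n - x k))\<^sup>2 \<le> 1/Suc n + 1/Suc k" for n k
  proof -
    define mid where "mid = (1/2) *\<^sub>R (x n + x k)"
    define h where "h = (1/2) *\<^sub>R (x n - x k)"
    have "x n = mid + 1 *\<^sub>R h" "x k = mid + (-1) *\<^sub>R h"
      unfolding mid_def h_def by (simp_all add: algebra_simps flip: scaleR_add_left)
    hence "G (x n) = G mid + D mid h + R h" "G (x k) = G mid - D mid h + R h"
      using quadratic_expansionD[OF G, of mid 1 h] quadratic_expansionD[OF G, of mid "-1" h] by simp_all
    moreover have "(norm (x n - x k))\<^sup>2 = 4 * (norm h)\<^sup>2"
      unfolding h_def by (simp add: power2_eq_square)
    hence "R h \<ge> c * (norm (x n - x k))\<^sup>2 / 4" using R[of h] by simp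
    ultimately show ?thesis using lower[of mid] x[of n] x[of k] by linarith
  qed
  fix e :: real assume e: "e > 0"
  have ce: "c * e\<^sup>2 > 0" using c e by simp
  obtain N :: nat where N: "4 / (c * e\<^sup>2) < N" using reals_Archimedean2 by blast
  have Npos: "real N > 0" using N ce by (smt (verit) divide_pos_pos)
  show "\<exists>M. \<forall>m\<ge>M. \<forall>n\<ge>M. norm (x m - x n) < e"
  proof (intro exI allI impI)
    fix a b assume ab: "N \<le> a" "N \<le> b"
    hence "1/Suc a \<le> 1/N" "1/Suc b \<le> 1/N" using Npos
      by (auto intro!: divide_left_mono simp del: of_nat_Suc)
    hence "c/2 * (norm (x a - x b))\<^sup>2 \<le> 2/N" using key[of a b] by linarith
    also have "\<dots> < c/2 * e\<^sup>2"
    proof -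
      have "4 < N * (c * e\<^sup>2)" using N ce by (simp add: pos_divide_less_eq)
      thus ?thesis using Npos by (simp add: pos_divide_less_eq algebra_simps)
    qed
    finally have "(norm (x a - x b))\<^sup>2 < e\<^sup>2" using c by simp
    thus "norm (x a - x b) < e" by (rule power_less_imp_less_base) (use e in simp)
  qed
qed

lemma quadratic_expansion_has_minimizer:
  fixes G :: "'v::{real_inner,complete_space} \<Rightarrow> real"
  assumes G: "quadratic_expansion G D R"
    and Rlo: "\<And>v. c * (norm v)\<^sup>2 \<le> R v" and c: "c > 0"
    and Rhi: "\<And>v. R v \<le> C * (norm v)\<^sup>2"
    and Dbd: "\<And>w. \<exists>K. \<forall>v. \<bar>D w v\<bar> \<le> K * norm v"
  shows "\<exists>w. is_minimizer G w"
proof -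
  obtain K0 where K0: "\<And>v. \<bar>D 0 v\<bar> \<le> K0 * norm v" using Dbd by blast
  have "G v \<ge> G 0 - K0\<^sup>2 / (4*c)" for v
  proof -
    have "G v = G 0 + D 0 v + R v" using quadratic_expansionD[OF G, of 0 1 v] by simp
    moreover have "K0 * norm v - c * (norm v)\<^sup>2 \<le> K0\<^sup>2 / (4*c)"
    proof -
      have "0 \<le> (2*c*norm v - K0)\<^sup>2" by simp
      hence "4*c*(K0 * norm v - c * (norm v)\<^sup>2) \<le> K0\<^sup>2"
        by (simp add: power2_eq_square algebra_simps)
      thus ?thesis using c by (simp add: field_simps)
    qed
    ultimately show ?thesis using K0[of v] Rlo[of v] by linarith
  qed
  hence bdd: "bdd_below (range G)" by (intro bdd_belowI2) auto
  define m where "m = Inf (range G)"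
  have lower: "m \<le> G v" for v unfolding m_def using bdd by (simp add: cInf_lower)
  have "\<exists>x. G x < m + 1 / Suc n" for n
    using cInf_lessD[of "range G" "m + 1/Suc n"] unfolding m_def by auto
  then obtain x where x: "\<And>n. G (x n) < m + 1 / Suc n" by metis
  have "Cauchy x" by (rule quadratic_expansion_minimizing_Cauchy[OF G Rlo c lower x])
  then obtain y where y: "x \<longlonglongrightarrow> y" using Cauchy_convergent_iff convergent_def by blast
  obtain Ky where Ky: "\<And>v. \<bar>D y v\<bar> \<le> Ky * norm v" using Dbd by blast
  have "\<bar>R v\<bar> \<le> \<bar>C\<bar> * (norm v)\<^sup>2" for v
    using Rlo[of v] Rhi[of v] c abs_ge_self[of C] by (smt (verit) mult_right_mono zero_le_power2 mult_nonneg_nonneg)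
  hence "isCont G y" by (rule quadratic_expansion_isCont[OF G _ Ky])
  hence "(\<lambda>n. G (x n)) \<longlonglongrightarrow> G y" by (rule isCont_tendsto_compose[OF _ y])
  moreover have "(\<lambda>n. m + 1 / Suc n) \<longlonglongrightarrow> m"
    using tendsto_add[OF tendsto_const LIMSEQ_inverse_real_of_nat, of m] by (simp add: inverse_eq_divide)
  ultimately have "G y \<le> m" by (rule LIMSEQ_le) (use x less_imp_le in blast)
  hence "is_minimizer G y" unfolding is_minimizer_def using lower by (meson order.trans)
  thus ?thesis by blast
qed

lemma riesz_representation:
  fixes \<phi> :: "'v::{real_inner,complete_space} \<Rightarrow> real"
  assumes "bounded_linear \<phi>"
  shows "\<exists>z. \<forall>v. \<phi> v = inner z v"
proof -
  interpret \<phi>: bounded_linear \<phi> by fact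
  obtain K where K: "\<And>v. norm (\<phi> v) \<le> norm v * K" using \<phi>.bounded by blast
  define G where "G w = (norm w)\<^sup>2 / 2 - \<phi> w" for w
  define D where "D w v = inner w v - \<phi> v" for w v
  define R where "R v = (norm v)\<^sup>2 / 2" for v :: 'v
  have G: "quadratic_expansion G D R"
    unfolding quadratic_expansion_def G_def D_def R_def power2_norm_eq_inner
    by (simp add: \<phi>.add \<phi>.scaleR inner_add_left inner_add_right algebra_simps power2_eq_square inner_commute)
  have "\<bar>D w v\<bar> \<le> (norm w + K) * norm v" for w v
    using Cauchy_Schwarz_ineq2[of w v] K[of v] unfolding D_def by (simp add: algebra_simps)
  then obtain z where z: "is_minimizer G z"
    using quadratic_expansion_has_minimizer[OF G, of "1/2" "1/2"] unfolding R_def by auto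
  have "\<phi> v = inner z v" for v using quadratic_expansion_minimizer(1)[OF G z, of v] unfolding D_def by simp
  thus ?thesis by blast
qed

section \<open>Weak convergence\<close>

lemma weak_conv_subseq: "weak_conv u w \<Longrightarrow> strict_mono s \<Longrightarrow> weak_conv (u \<circ> s) w"
  unfolding weak_conv_def using LIMSEQ_subseq_LIMSEQ by (fastforce simp: o_def)

lemma weak_conv_bounded_linear:
  fixes \<phi> :: "'v::{real_inner,complete_space} \<Rightarrow> real"
  assumes "weak_conv u w" and "bounded_linear \<phi>"
  shows "(\<lambda>n. \<phi> (u n)) \<longlonglongrightarrow> \<phi> w"
proof -
  obtain z where z: "\<And>v. \<phi> v = inner z v" using riesz_representation[OF assms(2)] by blast
  have "(\<lambda>n. inner (u n) z) \<longlonglongrightarrow> inner w z" using assms(1) unfolding weak_conv_def by blast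
  thus ?thesis unfolding z by (simp add: inner_commute[of z])
qed

lemma weak_conv_perturb:
  assumes "weak_conv a w" and "(\<lambda>n. norm (b n - a n)) \<longlonglongrightarrow> 0"
  shows "weak_conv b w"
  unfolding weak_conv_def
proof
  fix z
  have "(\<lambda>n. inner (b n - a n) z) \<longlonglongrightarrow> 0"
  proof (rule Lim_null_comparison[rotated])
    show "(\<lambda>n. norm (b n - a n) * norm z) \<longlonglongrightarrow> 0"
      using tendsto_mult_left_zero[OF assms(2)] by simp
  qed (simp add: Cauchy_Schwarz_ineq2)
  moreover have "(\<lambda>n. inner (a n) z) \<longlonglongrightarrow> inner w z" using assms(1) unfolding weak_conv_def by blast
  ultimately have "(\<lambda>n. inner (a n) z + inner (b n - a n) z) \<longlonglongrightarrow> inner w z" using tendsto_add by fastforce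
  thus "(\<lambda>n. inner (b n) z) \<longlonglongrightarrow> inner w z" by (simp add: inner_diff_left)
qed

lemma blinfun_tendsto_weak_conv:
  fixes A :: "nat \<Rightarrow> 'v::{real_inner,complete_space} \<Rightarrow>\<^sub>L real"
  assumes A: "A \<longlonglongrightarrow> A0" and b: "weak_conv b w" and R: "\<And>n. norm (b n) \<le> R"
  shows "(\<lambda>n. A n (b n)) \<longlonglongrightarrow> A0 w"
proof -
  have "(\<lambda>n. (A n - A0) (b n)) \<longlonglongrightarrow> 0"
  proof (rule Lim_null_comparison[rotated])
    have "(\<lambda>n. norm (A n - A0)) \<longlonglongrightarrow> 0" using A by (simp add: LIM_zero_iff tendsto_norm_zero)
    thus "(\<lambda>n. norm (A n - A0) * R) \<longlonglongrightarrow> 0" by (rule tendsto_mult_left_zero)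
    show "\<forall>\<^sub>F n in sequentially. norm ((A n - A0) (b n)) \<le> norm (A n - A0) * R"
      using norm_blinfun order_trans mult_left_mono[OF R norm_ge_zero] by (blast intro: always_eventually)
  qed
  moreover have "(\<lambda>n. A0 (b n)) \<longlonglongrightarrow> A0 w" by (rule weak_conv_bounded_linear[OF b blinfun.bounded_linear_right])
  ultimately have "(\<lambda>n. (A n - A0) (b n) + A0 (b n)) \<longlonglongrightarrow> 0 + A0 w" by (rule tendsto_add)
  thus ?thesis by (simp add: blinfun.diff_left)
qed

section \<open>Concavity of powers and the smoothing \<open>\<psi>\<^sub>\<epsilon>\<close>\<close>

definition tangent_powr :: "real \<Rightarrow> real \<Rightarrow> real \<Rightarrow> real" where
  "tangent_powr q a s = a powr q + q * a powr (q - 1) * (s - a)"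

lemma powr_le_tangent_powr:
  fixes a s q :: real
  assumes a: "a > 0" and s: "s \<ge> 0" and q: "0 < q" "q < 1"
  shows "s powr q \<le> tangent_powr q a s"
  unfolding tangent_powr_def
proof (cases "s = 0")
  case True
  have "a powr (q - 1) * a = a powr q" using a by (simp add: powr_diff)
  hence "a powr q + q * a powr (q - 1) * (s - a) = (1 - q) * a powr q"
    using True by (simp add: algebra_simps)
  moreover have "(1 - q) * a powr q \<ge> 0" using q by simp
  ultimately show "s powr q \<le> a powr q + q * a powr (q - 1) * (s - a)" using True by simp
next
  case False
  define z where "z = s / a"
  have z: "z > 0" unfolding z_def using a s False by simp
  have "z powr q * 1 powr (1 - q) \<le> q * z + (1 - q) * 1"
    by (rule Youngs_inequality_0) (use q z in auto)
  hence Y: "z powr q \<le> q * z + (1 - q)" by simp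
  have "s powr q = a powr q * z powr q" unfolding z_def using a s by (simp add: powr_divide)
  also have "\<dots> \<le> a powr q * (q * z + (1 - q))" using Y a by (simp add: mult_left_mono)
  also have "\<dots> = a powr q + q * a powr (q - 1) * (s - a)"
  proof -
    have "a powr (q - 1) = a powr q / a" using a by (simp add: powr_diff)
    thus ?thesis unfolding z_def using a by (simp add: field_simps)
  qed
  finally show "s powr q \<le> a powr q + q * a powr (q - 1) * (s - a)" .
qed

lemma max_power2_pos: "(\<epsilon>::real) > 0 \<Longrightarrow> 0 < max t (\<epsilon>\<^sup>2)"
  using zero_less_power[of \<epsilon> 2] max.cobounded2[of "\<epsilon>\<^sup>2" t] by linarith

lemma tangent_powr_mono:
  assumes a: "0 < a" "a \<le> x" and s: "0 \<le> s" "s \<le> a" and q: "0 < q" "q < 1"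
  shows "tangent_powr q a s \<le> tangent_powr q x s"
proof -
  have x: "x > 0" using a by simp
  have "tangent_powr q x s - tangent_powr q a s = (tangent_powr q x a - a powr q) + (q * x powr (q - 1) - q * a powr (q - 1)) * (s - a)"
    unfolding tangent_powr_def by (simp add: algebra_simps)
  moreover have "tangent_powr q x a - a powr q \<ge> 0" using powr_le_tangent_powr[OF x, of a q] a q by simp
  moreover have "x powr (q - 1) \<le> a powr (q - 1)"
    using a q by (intro powr_mono2') auto
  hence "(q * x powr (q - 1) - q * a powr (q - 1)) * (s - a) \<ge> 0"
    using s q by (intro mult_nonpos_nonpos) (auto simp: mult_left_mono)
  ultimately show ?thesis by linarith
qed

lemma psi_eq_tangent_powr:
  assumes e: "\<epsilon> > 0" and t: "t \<ge> 0"
  shows "psi p \<epsilon> t = tangent_powr (p/2) (max t (\<epsilon>\<^sup>2)) t"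
proof (cases "t < \<epsilon>\<^sup>2")
  case True
  have m: "max t (\<epsilon>\<^sup>2) = \<epsilon>\<^sup>2" using True by simp
  have e1: "(\<epsilon>\<^sup>2) powr (p/2) = \<epsilon> powr p" using e
    by (simp add: powr_powr flip: powr_numeral)
  have e2: "(\<epsilon>\<^sup>2) powr (p/2 - 1) = \<epsilon> powr (p - 2)" using e
    by (simp add: powr_powr algebra_simps flip: powr_numeral)
  have e3: "\<epsilon> powr (p - 2) * \<epsilon>\<^sup>2 = \<epsilon> powr p" using e
    by (simp add: powr_diff flip: powr_numeral)
  have e4: "t / \<epsilon> powr (2 - p) = t * \<epsilon> powr (p - 2)" using e
    by (simp add: powr_minus_divide divide_inverse powr_minus[symmetric])
  have "psi p \<epsilon> t = p/2 * (t / \<epsilon> powr (2-p)) + (1-p/2)*\<epsilon> powr p"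
    using True unfolding psi_def by simp
  also have "\<dots> = p/2 * (t * \<epsilon> powr (p - 2)) + (1-p/2)*\<epsilon> powr p" using e4 by simp
  finally have L: "psi p \<epsilon> t = p/2 * (t * \<epsilon> powr (p - 2)) + (1-p/2)*\<epsilon> powr p" .
  have "tangent_powr (p/2) (max t (\<epsilon>\<^sup>2)) t = \<epsilon> powr p + p/2 * \<epsilon> powr (p - 2) * (t - \<epsilon>\<^sup>2)"
    unfolding tangent_powr_def m e1 e2 ..
  also have "\<dots> = \<epsilon> powr p + p/2 * (t * \<epsilon> powr (p - 2)) - p/2 * (\<epsilon>\<^sup>2 * \<epsilon> powr (p - 2))"
    by (simp add: right_diff_distrib left_diff_distrib mult_ac)
  finally have R: "tangent_powr (p/2) (max t (\<epsilon>\<^sup>2)) t = \<epsilon> powr p + p/2 * (t * \<epsilon> powr (p - 2)) - p/2 * (\<epsilon>\<^sup>2 * \<epsilon> powr (p - 2))" .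
  have x1: "p/2 * (\<epsilon>\<^sup>2 * \<epsilon> powr (p - 2)) = p/2 * \<epsilon> powr p" using e3 by (simp add: mult.commute)
  have x2: "(1-p/2)*\<epsilon> powr p = \<epsilon> powr p - p/2 * \<epsilon> powr p" by (simp add: algebra_simps)
  show ?thesis using L R x1 x2 by linarith
next
  case False
  thus ?thesis unfolding psi_def tangent_powr_def by simp
qed

lemma dpsi_eq_max:
  assumes e: "\<epsilon> > 0" and t: "t \<ge> 0"
  shows "dpsi p \<epsilon> t = p/2 * (max t (\<epsilon>\<^sup>2)) powr (p/2 - 1)"
proof (cases "t < \<epsilon>\<^sup>2")
  case True
  have e2: "(\<epsilon>\<^sup>2) powr (p/2 - 1) = \<epsilon> powr (p - 2)" using e
    by (simp add: powr_powr algebra_simps flip: powr_numeral)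
  show ?thesis unfolding dpsi_def using True e2 by simp
next
  case False
  thus ?thesis unfolding dpsi_def by (simp add: diff_divide_distrib)
qed

lemma psi_le_linearization:
  assumes e: "\<epsilon> > 0" and s: "s \<ge> 0" and t: "t \<ge> 0" and p: "0 < p" "p < 1"
  shows "psi p \<epsilon> s \<le> psi p \<epsilon> t + dpsi p \<epsilon> t * (s - t)"
proof -
  define q where "q = p/2"
  have q: "0 < q" "q < 1" using p unfolding q_def by auto
  define a where "a = max t (\<epsilon>\<^sup>2)"
  have a: "a > 0" "\<epsilon>\<^sup>2 \<le> a" unfolding a_def using max_power2_pos[OF e] by auto
  have rhs: "psi p \<epsilon> t + dpsi p \<epsilon> t * (s - t) = tangent_powr q a s"
    unfolding psi_eq_tangent_powr[OF e t] dpsi_eq_max[OF e t] tangent_powr_def q_def a_def by (simp add: field_simps)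
  have "psi p \<epsilon> s \<le> tangent_powr q a s"
  proof (cases "s < \<epsilon>\<^sup>2")
    case True
    hence "psi p \<epsilon> s = tangent_powr q (\<epsilon>\<^sup>2) s" unfolding psi_eq_tangent_powr[OF e s] q_def by simp
    also have "\<dots> \<le> tangent_powr q a s" using True a e s q by (intro tangent_powr_mono) auto
    finally show ?thesis .
  next
    case False
    hence "psi p \<epsilon> s = s powr q" unfolding psi_def q_def by simp
    also have "\<dots> \<le> tangent_powr q a s" using a s q by (intro powr_le_tangent_powr) auto
    finally show ?thesis .
  qed
  thus ?thesis using rhs by simp
qed

lemma psi_mono_eps:
  assumes e: "0 < \<epsilon>'" "\<epsilon>' \<le> \<epsilon>" and t: "t \<ge> 0" and p: "0 < p" "p < 1"
  shows "psi p \<epsilon>' t \<le> psi p \<epsilon> t"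
proof -
  define q where "q = p/2"
  have q: "0 < q" "q < 1" using p unfolding q_def by auto
  have ee: "\<epsilon>'\<^sup>2 \<le> \<epsilon>\<^sup>2" using e by (simp add: power_mono)
  have e0: "\<epsilon> > 0" using e by simp
  show ?thesis
  proof (cases "t < \<epsilon>'\<^sup>2")
    case True
    hence "psi p \<epsilon>' t = tangent_powr q (\<epsilon>'\<^sup>2) t" unfolding psi_eq_tangent_powr[OF e(1) t] q_def by simp
    also have "\<dots> \<le> tangent_powr q (\<epsilon>\<^sup>2) t" using True e ee t q by (intro tangent_powr_mono) auto
    also have "\<dots> = psi p \<epsilon> t" unfolding psi_eq_tangent_powr[OF e0 t] q_def using True ee by simp
    finally show ?thesis .
  next
    case False
    hence "psi p \<epsilon>' t = t powr q" unfolding psi_def q_def by simp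
    also have "\<dots> \<le> tangent_powr q (max t (\<epsilon>\<^sup>2)) t" using e0 t q max_power2_pos[OF e0] by (intro powr_le_tangent_powr) auto
    also have "\<dots> = psi p \<epsilon> t" unfolding psi_eq_tangent_powr[OF e0 t] q_def ..
    finally show ?thesis .
  qed
qed

lemma psi_nonneg:
  assumes e: "\<epsilon> > 0" and t: "t \<ge> 0" and p: "0 < p" "p < 1"
  shows "psi p \<epsilon> t \<ge> 0"
proof -
  have "t powr (p/2) \<le> tangent_powr (p/2) (max t (\<epsilon>\<^sup>2)) t" using e t p max_power2_pos[OF e] by (intro powr_le_tangent_powr) auto
  thus ?thesis unfolding psi_eq_tangent_powr[OF e t] by (meson order.trans powr_ge_zero)
qed

lemma powr_le_1_plus:
  fixes t q :: real assumes "t \<ge> 0" "0 < q" "q < 1"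
  shows "t powr q \<le> 1 + t"
proof (cases "t \<le> 1")
  case True
  hence "t powr q \<le> 1" using assms by (intro powr_le1) auto
  thus ?thesis using assms by simp
next
  case False
  hence "t powr q \<le> t powr 1" using assms by (intro powr_mono) auto
  thus ?thesis using False by simp
qed

lemma psi_le_affine:
  assumes e: "\<epsilon> > 0" and t: "t \<ge> 0" and p: "0 < p" "p < 1"
  shows "psi p \<epsilon> t \<le> \<epsilon> powr p + 1 + t"
proof (cases "t < \<epsilon>\<^sup>2")
  case True
  have "psi p \<epsilon> t = tangent_powr (p/2) (\<epsilon>\<^sup>2) t" unfolding psi_eq_tangent_powr[OF e t] using True by simp
  also have "\<dots> \<le> tangent_powr (p/2) (\<epsilon>\<^sup>2) (\<epsilon>\<^sup>2)" unfolding tangent_powr_def using True p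
    by (intro add_left_mono mult_right_mono mult_left_mono) auto
  also have "\<dots> = \<epsilon> powr p" unfolding tangent_powr_def using e by (simp add: powr_powr flip: powr_numeral)
  finally show ?thesis using t by simp
next
  case False
  hence "psi p \<epsilon> t = t powr (p/2)" unfolding psi_def by simp
  also have "\<dots> \<le> 1 + t" using t p by (intro powr_le_1_plus) auto
  finally show ?thesis using powr_ge_zero[of \<epsilon> p] by linarith
qed

lemma dpsi_bounds:
  assumes e: "\<epsilon> > 0" and t: "t \<ge> 0" and p: "0 < p" "p < 1"
  shows "0 < dpsi p \<epsilon> t" "dpsi p \<epsilon> t \<le> p/2 * \<epsilon> powr (p - 2)"
proof -
  have m: "max t (\<epsilon>\<^sup>2) > 0" using e by (rule max_power2_pos)
  show "0 < dpsi p \<epsilon> t" unfolding dpsi_eq_max[OF e t] using p m by simp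
  have "max t (\<epsilon>\<^sup>2) powr (p/2 - 1) \<le> (\<epsilon>\<^sup>2) powr (p/2 - 1)"
    using p e by (intro powr_mono2') auto
  also have "(\<epsilon>\<^sup>2) powr (p/2 - 1) = \<epsilon> powr (p - 2)" using e
    by (simp add: powr_powr algebra_simps flip: powr_numeral)
  finally show "dpsi p \<epsilon> t \<le> p/2 * \<epsilon> powr (p - 2)" unfolding dpsi_eq_max[OF e t] using p
    by (simp add: mult_left_mono)
qed

lemma psi_measurable[measurable]: "psi p \<epsilon> \<in> borel_measurable borel"
  unfolding psi_def by measurable

lemma dpsi_measurable[measurable]: "dpsi p \<epsilon> \<in> borel_measurable borel"
  unfolding dpsi_def by measurable
lemma dpsi_weighted_square_tendsto:
  fixes f g e :: "nat \<Rightarrow> real"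
  assumes f: "f \<longlonglongrightarrow> f0" and g: "g \<longlonglongrightarrow> f0" and e: "e \<longlonglongrightarrow> 0" and f0: "f0 \<noteq> 0"
  shows "(\<lambda>n. 2 * dpsi p (e n) ((f n)\<^sup>2) * (g n)\<^sup>2) \<longlonglongrightarrow> p * \<bar>f0\<bar> powr p"
proof -
  have "(\<lambda>n. (f n)\<^sup>2 - (e n)\<^sup>2) \<longlonglongrightarrow> f0\<^sup>2 - 0\<^sup>2" by (intro tendsto_intros f e)
  moreover have "f0\<^sup>2 - 0\<^sup>2 > 0" using f0 by simp
  ultimately have "eventually (\<lambda>n. (f n)\<^sup>2 - (e n)\<^sup>2 > 0) sequentially" by (rule order_tendstoD)
  hence eq: "eventually (\<lambda>n. p * ((f n)\<^sup>2) powr ((p - 2)/2) * (g n)\<^sup>2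
      = 2 * dpsi p (e n) ((f n)\<^sup>2) * (g n)\<^sup>2) sequentially"
    by eventually_elim (simp add: dpsi_def)
  have "(\<lambda>n. p * ((f n)\<^sup>2) powr ((p - 2)/2) * (g n)\<^sup>2) \<longlonglongrightarrow> p * (f0\<^sup>2) powr ((p - 2)/2) * f0\<^sup>2"
    using f0 by (intro tendsto_intros tendsto_powr f g) auto
  moreover have "(f0\<^sup>2) powr ((p - 2)/2) * f0\<^sup>2 = \<bar>f0\<bar> powr p"
  proof -
    have sq: "f0\<^sup>2 = \<bar>f0\<bar> powr 2" using f0 by (simp add: powr_numeral)
    have A: "(f0\<^sup>2) powr ((p - 2)/2) = \<bar>f0\<bar> powr (p - 2)"
      unfolding sq powr_powr by (rule arg_cong[where f="\<lambda>t. \<bar>f0\<bar> powr t"]) (simp add: field_simps)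
    have B: "\<bar>f0\<bar> powr (p - 2) * \<bar>f0\<bar> powr 2 = \<bar>f0\<bar> powr p"
      using powr_add[of "\<bar>f0\<bar>" "p - 2" 2] by simp
    show ?thesis unfolding A by (subst sq) (rule B)
  qed
  ultimately have "(\<lambda>n. p * ((f n)\<^sup>2) powr ((p - 2)/2) * (g n)\<^sup>2) \<longlonglongrightarrow> p * \<bar>f0\<bar> powr p"
    by (simp add: mult.assoc)
  thus ?thesis by (rule Lim_transform_eventually[OF _ eq])
qed

text \<open>Where the limit vanishes the weights \<open>\<psi>\<^sub>\<epsilon>'\<close> may blow up, so only the lower bound
  survives.\<close>

lemma dpsi_weighted_square_liminf:
  fixes f g e :: "nat \<Rightarrow> real"
  assumes "f \<longlonglongrightarrow> f0" and "g \<longlonglongrightarrow> f0" and "e \<longlonglongrightarrow> 0"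
  shows "ennreal (p * \<bar>f0\<bar> powr p) \<le> liminf (\<lambda>n. ennreal (2 * dpsi p (e n) ((f n)\<^sup>2) * (g n)\<^sup>2))"
proof (cases "f0 = 0")
  case False
  have "(\<lambda>n. 2 * dpsi p (e n) ((f n)\<^sup>2) * (g n)\<^sup>2) \<longlonglongrightarrow> p * \<bar>f0\<bar> powr p"
    by (rule dpsi_weighted_square_tendsto[OF assms False])
  hence "liminf (\<lambda>n. ennreal (2 * dpsi p (e n) ((f n)\<^sup>2) * (g n)\<^sup>2)) = ennreal (p * \<bar>f0\<bar> powr p)"
    by (intro lim_imp_Liminf) (auto intro: tendsto_ennrealI)
  thus ?thesis by simp
qed simp

section \<open>Growth bounds and the descent lemma\<close>

lemma quadratic_growth_bound:
  fixes a b c s :: real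
  assumes a: "a > 0" and s: "s \<ge> 0" and h: "a * s\<^sup>2 - b * s \<le> c"
  shows "s \<le> 1 + 2 * \<bar>b\<bar> / a + 2 * \<bar>c\<bar> / a"
proof -
  have nb: "0 \<le> 2 * \<bar>b\<bar> / a" "0 \<le> 2 * \<bar>c\<bar> / a" using a by auto
  show ?thesis
  proof (cases "s \<le> 1 \<or> s \<le> 2 * \<bar>b\<bar> / a")
    case True thus ?thesis using nb by auto
  next
    case False
    hence s1: "s > 1" and sb: "2 * \<bar>b\<bar> < a * s" using a by (auto simp: field_simps)
    have "b * s \<le> \<bar>b\<bar> * s" using s by (intro mult_right_mono) auto
    also have "\<dots> \<le> a * s / 2 * s" using sb s by (intro mult_right_mono) auto
    finally have "a * s\<^sup>2 / 2 \<le> c" using h by (simp add: power2_eq_square field_simps)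
    hence "s\<^sup>2 \<le> 2 * c / a" using a by (simp add: field_simps)
    moreover have "s \<le> s\<^sup>2" using s1 by (simp add: power2_eq_square)
    moreover have "2 * c / a \<le> 2 * \<bar>c\<bar> / a" using a by (simp add: divide_right_mono)
    ultimately show ?thesis using nb by linarith
  qed
qed

lemma lipschitz_derivative_descent:
  fixes F :: "'v::real_normed_vector \<Rightarrow> real" and F' :: "'v \<Rightarrow> 'v \<Rightarrow>\<^sub>L real"
  assumes der: "\<And>y. (F has_derivative blinfun_apply (F' y)) (at y)"
    and lip: "lipschitz_on M1 S F'" and conv: "convex S" and xS: "x \<in> S" and yS: "y \<in> S"
  shows "F y \<le> F x + F' x (y - x) + M1 * (norm (y - x))\<^sup>2"
proof (cases "y = x")
  case True thus ?thesis by simp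
next
  case False
  define d where "d = y - x"
  define \<phi> where "\<phi> t = F (x + t *\<^sub>R d) - t * F' x d" for t
  have M1: "M1 \<ge> 0" using lip unfolding lipschitz_on_def by blast
  have D: "DERIV \<phi> t :> (F' (x + t *\<^sub>R d) d - F' x d)" for t
  proof -
    have "((\<lambda>t. x + t *\<^sub>R d) has_derivative (\<lambda>h. h *\<^sub>R d)) (at t)"
      by (auto intro!: derivative_eq_intros)
    from has_derivative_compose[OF this der]
    have "((\<lambda>t. F (x + t *\<^sub>R d)) has_derivative (\<lambda>h. F' (x + t *\<^sub>R d) (h *\<^sub>R d))) (at t)" .
    hence "DERIV (\<lambda>t. F (x + t *\<^sub>R d)) t :> F' (x + t *\<^sub>R d) d"
      by (rule has_derivative_imp_has_field_derivative) (simp add: blinfun.scaleR_right)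
    moreover have "DERIV (\<lambda>t. t * F' x d) t :> F' x d" by (auto intro!: derivative_eq_intros)
    ultimately show ?thesis unfolding \<phi>_def by (rule DERIV_diff)
  qed
  obtain z where z: "0 < z" "z < 1" "\<phi> 1 - \<phi> 0 = (1 - 0) * (F' (x + z *\<^sub>R d) d - F' x d)"
    using MVT2[of 0 1 \<phi>, OF _ D] by auto
  have zS: "x + z *\<^sub>R d \<in> S"
  proof -
    have "x + z *\<^sub>R d = (1 - z) *\<^sub>R x + z *\<^sub>R y" unfolding d_def by (simp add: algebra_simps)
    thus ?thesis using convexD[OF conv xS yS, of "1 - z" z] z by auto
  qed
  have "F' (x + z *\<^sub>R d) d - F' x d = (F' (x + z *\<^sub>R d) - F' x) d" by (simp add: blinfun.diff_left)
  also have "\<dots> \<le> norm (F' (x + z *\<^sub>R d) - F' x) * norm d"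
    using norm_blinfun[of "F' (x + z *\<^sub>R d) - F' x" d] by simp
  also have "norm (F' (x + z *\<^sub>R d) - F' x) \<le> M1 * norm (z *\<^sub>R d)"
    using lip zS xS unfolding lipschitz_on_def dist_norm by (metis add_diff_cancel_left')
  hence "norm (F' (x + z *\<^sub>R d) - F' x) * norm d \<le> M1 * norm (z *\<^sub>R d) * norm d"
    by (intro mult_right_mono) auto
  also have "M1 * norm (z *\<^sub>R d) * norm d \<le> M1 * (norm d)\<^sup>2"
  proof -
    have "z * (norm d * norm d) \<le> norm d * norm d" using z by (intro mult_left_le_one_le) auto
    hence "M1 * (z * (norm d * norm d)) \<le> M1 * (norm d * norm d)" using M1 by (rule mult_left_mono)
    thus ?thesis using z by (simp add: power2_eq_square mult.assoc)
  qed
  finally have "\<phi> 1 - \<phi> 0 \<le> M1 * (norm d)\<^sup>2" using z(3) by simp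
  thus ?thesis unfolding \<phi>_def d_def by simp
qed

lemma lipschitz_on_cball_norm_le:
  assumes lip: "lipschitz_on M (cball 0 R) f" and x: "norm x \<le> R"
  shows "norm (f x) \<le> norm (f 0) + M * R"
proof -
  have "R \<ge> 0" using x norm_ge_zero order_trans by blast
  hence "dist (f x) (f 0) \<le> M * dist x 0" using x by (intro lipschitz_onD[OF lip]) auto
  also have "\<dots> \<le> M * R" using x lipschitz_on_nonneg[OF lip] by (simp add: mult_left_mono)
  finally have "norm (f x - f 0) \<le> M * R" by (simp add: dist_norm)
  moreover have "norm (f x) \<le> norm (f 0) + norm (f x - f 0)" by (rule norm_triangle_sub)
  ultimately show ?thesis by linarith
qed

section \<open>Square integrable functions\<close>

lemma integrable_mult_square_integrable:
  fixes f g :: "'a \<Rightarrow> real"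
  assumes "f \<in> borel_measurable M" "g \<in> borel_measurable M"
    "integrable M (\<lambda>x. (f x)\<^sup>2)" "integrable M (\<lambda>x. (g x)\<^sup>2)"
  shows "integrable M (\<lambda>x. f x * g x)"
proof (rule Bochner_Integration.integrable_bound)
  show "integrable M (\<lambda>x. (f x)\<^sup>2 + (g x)\<^sup>2)" using assms by simp
  show "(\<lambda>x. f x * g x) \<in> borel_measurable M" using assms by simp
  show "AE x in M. norm (f x * g x) \<le> norm ((f x)\<^sup>2 + (g x)\<^sup>2)"
  proof (intro AE_I2)
    fix x
    have "0 \<le> (\<bar>f x\<bar> - \<bar>g x\<bar>)\<^sup>2" by simp
    hence "2 * \<bar>f x\<bar> * \<bar>g x\<bar> \<le> (f x)\<^sup>2 + (g x)\<^sup>2" by (simp add: power2_eq_square algebra_simps)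
    moreover have "\<bar>f x * g x\<bar> = \<bar>f x\<bar> * \<bar>g x\<bar>" by (rule abs_mult)
    moreover have "0 \<le> \<bar>f x\<bar> * \<bar>g x\<bar>" by simp
    moreover have "\<bar>(f x)\<^sup>2 + (g x)\<^sup>2\<bar> = (f x)\<^sup>2 + (g x)\<^sup>2" by simp
    ultimately show "norm (f x * g x) \<le> norm ((f x)\<^sup>2 + (g x)\<^sup>2)"
      unfolding real_norm_def by linarith
  qed
qed

lemma integrable_bounded_mult_square_integrable:
  fixes f g a :: "'a \<Rightarrow> real"
  assumes "f \<in> borel_measurable M" "g \<in> borel_measurable M"
    "integrable M (\<lambda>x. (f x)\<^sup>2)" "integrable M (\<lambda>x. (g x)\<^sup>2)"
    "a \<in> borel_measurable M" "\<And>x. \<bar>a x\<bar> \<le> A"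
  shows "integrable M (\<lambda>x. a x * f x * g x)"
proof (rule Bochner_Integration.integrable_bound)
  show "integrable M (\<lambda>x. A * (f x * g x))" using integrable_mult_square_integrable[OF assms(1-4)] by simp
  show "(\<lambda>x. a x * f x * g x) \<in> borel_measurable M" using assms by simp
  show "AE x in M. norm (a x * f x * g x) \<le> norm (A * (f x * g x))"
  proof (intro AE_I2)
    fix x
    have "\<bar>a x\<bar> * \<bar>f x * g x\<bar> \<le> A * \<bar>f x * g x\<bar>" using assms(6) by (rule mult_right_mono) simp
    moreover have "A \<ge> 0" using assms(6)[of x] by linarith
    ultimately show "norm (a x * f x * g x) \<le> norm (A * (f x * g x))"
      by (simp add: abs_mult mult.assoc)
  qed
qed

lemma Cauchy_Schwarz_integral:
  fixes f g :: "'a \<Rightarrow> real"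
  assumes "f \<in> borel_measurable M" "g \<in> borel_measurable M"
    "integrable M (\<lambda>x. (f x)\<^sup>2)" "integrable M (\<lambda>x. (g x)\<^sup>2)"
  shows "(LINT x|M. f x * g x)\<^sup>2 \<le> (LINT x|M. (f x)\<^sup>2) * (LINT x|M. (g x)\<^sup>2)"
proof (rule quadratic_nonneg_discriminant)
  have fg: "integrable M (\<lambda>x. f x * g x)" by (rule integrable_mult_square_integrable[OF assms])
  show "0 \<le> (LINT x|M. (f x)\<^sup>2) + 2 * (LINT x|M. f x * g x) * t + (LINT x|M. (g x)\<^sup>2) * t\<^sup>2" for t
  proof -
    have "0 \<le> (LINT x|M. (f x + t * g x)\<^sup>2)" by (rule integral_nonneg_AE) simp
    also have "(LINT x|M. (f x + t * g x)\<^sup>2) = (LINT x|M. (f x)\<^sup>2 + (2 * t) * (f x * g x) + t\<^sup>2 * (g x)\<^sup>2)"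
      by (simp add: power2_eq_square algebra_simps)
    also have "\<dots> = (LINT x|M. (f x)\<^sup>2) + 2 * (LINT x|M. f x * g x) * t + (LINT x|M. (g x)\<^sup>2) * t\<^sup>2"
    proof -
      have i1: "integrable M (\<lambda>x. (2 * t) * (f x * g x))" using fg by simp
      have i2: "integrable M (\<lambda>x. t\<^sup>2 * (g x)\<^sup>2)" using assms by simp
      have i3: "integrable M (\<lambda>x. (f x)\<^sup>2 + (2 * t) * (f x * g x))" using i1 assms by simp
      have "(LINT x|M. (f x)\<^sup>2 + (2 * t) * (f x * g x) + t\<^sup>2 * (g x)\<^sup>2)
          = (LINT x|M. (f x)\<^sup>2 + (2 * t) * (f x * g x)) + (LINT x|M. t\<^sup>2 * (g x)\<^sup>2)"
        by (rule Bochner_Integration.integral_add[OF i3 i2])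
      also have "(LINT x|M. (f x)\<^sup>2 + (2 * t) * (f x * g x)) = (LINT x|M. (f x)\<^sup>2) + (LINT x|M. (2 * t) * (f x * g x))"
        by (rule Bochner_Integration.integral_add[OF assms(3) i1])
      finally show ?thesis by simp
    qed
    finally show "0 \<le> (LINT x|M. (f x)\<^sup>2) + 2 * (LINT x|M. f x * g x) * t + (LINT x|M. (g x)\<^sup>2) * t\<^sup>2" .
  qed
  show "0 \<le> (LINT x|M. (g x)\<^sup>2)" by (rule integral_nonneg_AE) simp
qed


lemma square_integrable_diff:
  fixes f g :: "'a \<Rightarrow> real"
  assumes "f \<in> borel_measurable M" "g \<in> borel_measurable M"
    "integrable M (\<lambda>x. (f x)\<^sup>2)" "integrable M (\<lambda>x. (g x)\<^sup>2)"
  shows "integrable M (\<lambda>x. (f x - g x)\<^sup>2)"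
proof -
  have "(\<lambda>x. (f x - g x)\<^sup>2) = (\<lambda>x. (f x)\<^sup>2 - 2 * (f x * g x) + (g x)\<^sup>2)"
    by (rule ext) (simp add: power2_eq_square algebra_simps)
  moreover have "integrable M (\<lambda>x. (f x)\<^sup>2 - 2 * (f x * g x) + (g x)\<^sup>2)"
    using integrable_mult_square_integrable[OF assms] assms by simp
  ultimately show ?thesis by simp
qed

lemma L2_tendsto_imp_inner_tendsto:
  fixes f :: "nat \<Rightarrow> 'a \<Rightarrow> real"
  assumes [measurable]: "\<And>n. f n \<in> borel_measurable M" "f0 \<in> borel_measurable M" "g \<in> borel_measurable M"
    and f2: "\<And>n. integrable M (\<lambda>x. (f n x)\<^sup>2)" and f02: "integrable M (\<lambda>x. (f0 x)\<^sup>2)"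
    and g2: "integrable M (\<lambda>x. (g x)\<^sup>2)"
    and lim: "(\<lambda>n. LINT x|M. (f n x - f0 x)\<^sup>2) \<longlonglongrightarrow> 0"
  shows "(\<lambda>n. LINT x|M. f n x * g x) \<longlonglongrightarrow> (LINT x|M. f0 x * g x)"
proof -
  have d2: "integrable M (\<lambda>x. (f n x - f0 x)\<^sup>2)" for n by (rule square_integrable_diff) (use f2 f02 in auto)
  have eq: "(LINT x|M. f n x * g x) - (LINT x|M. f0 x * g x) = (LINT x|M. (f n x - f0 x) * g x)" for n
    using integrable_mult_square_integrable[of "f n" M g] integrable_mult_square_integrable[of f0 M g] f2 f02 g2
    by (simp add: left_diff_distrib)
  have bnd: "norm (LINT x|M. (f n x - f0 x) * g x) \<le> sqrt (LINT x|M. (f n x - f0 x)\<^sup>2) * sqrt (LINT x|M. (g x)\<^sup>2)" for n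
  proof -
    have "(LINT x|M. (f n x - f0 x) * g x)\<^sup>2 \<le> (LINT x|M. (f n x - f0 x)\<^sup>2) * (LINT x|M. (g x)\<^sup>2)"
      by (rule Cauchy_Schwarz_integral) (use d2 g2 in auto)
    hence "\<bar>LINT x|M. (f n x - f0 x) * g x\<bar> \<le> sqrt ((LINT x|M. (f n x - f0 x)\<^sup>2) * (LINT x|M. (g x)\<^sup>2))"
      by (metis real_sqrt_abs real_sqrt_le_mono)
    thus ?thesis by (simp add: real_sqrt_mult)
  qed
  have "(\<lambda>n. sqrt (LINT x|M. (f n x - f0 x)\<^sup>2) * sqrt (LINT x|M. (g x)\<^sup>2)) \<longlonglongrightarrow> 0"
    using tendsto_mult[OF tendsto_real_sqrt[OF lim] tendsto_const] by simp
  hence "(\<lambda>n. (LINT x|M. f n x * g x) - (LINT x|M. f0 x * g x)) \<longlonglongrightarrow> 0"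
    unfolding eq by (rule Lim_null_comparison[rotated]) (use bnd in \<open>auto intro!: always_eventually\<close>)
  thus ?thesis by (simp add: LIM_zero_iff)
qed

lemma (in finite_measure) L2_tendsto_imp_AE_subseq:
  fixes h :: "nat \<Rightarrow> 'a \<Rightarrow> real" and h0 :: "'a \<Rightarrow> real"
  assumes hm[measurable]: "\<And>n. h n \<in> borel_measurable M" and h2: "\<And>n. integrable M (\<lambda>x. (h n x)\<^sup>2)"
    and h0m[measurable]: "h0 \<in> borel_measurable M" and h02: "integrable M (\<lambda>x. (h0 x)\<^sup>2)"
    and lim: "(\<lambda>n. LINT x|M. (h n x - h0 x)\<^sup>2) \<longlonglongrightarrow> 0"
  shows "\<exists>s. strict_mono s \<and> (AE x in M. (\<lambda>n. h (s n) x) \<longlonglongrightarrow> h0 x)"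
proof -
  define d where "d n x = h n x - h0 x" for n x
  have dm[measurable]: "d n \<in> borel_measurable M" for n unfolding d_def by measurable
  have d2: "integrable M (\<lambda>x. (d n x)\<^sup>2)" for n
    unfolding d_def by (rule square_integrable_diff[OF hm h0m h2 h02])
  have one: "integrable M (\<lambda>x. (1::real)\<^sup>2)" by simp
  have dint: "integrable M (d n)" for n by (rule square_integrable_imp_integrable[OF dm d2])
  have bnd: "norm (LINT x|M. norm (d n x)) \<le> sqrt ((LINT x|M. (d n x)\<^sup>2) * (LINT x|M. (1::real)\<^sup>2))" for n
  proof -
    have "(LINT x|M. \<bar>d n x\<bar> * 1)\<^sup>2 \<le> (LINT x|M. (\<bar>d n x\<bar>)\<^sup>2) * (LINT x|M. (1::real)\<^sup>2)"
      by (rule Cauchy_Schwarz_integral) (use d2 one in auto)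
    thus ?thesis by (simp add: real_le_rsqrt)
  qed
  have "(\<lambda>n. sqrt ((LINT x|M. (d n x)\<^sup>2) * (LINT x|M. (1::real)\<^sup>2))) \<longlonglongrightarrow> sqrt (0 * (LINT x|M. (1::real)\<^sup>2))"
    using lim unfolding d_def by (intro tendsto_real_sqrt tendsto_mult tendsto_const)
  hence "(\<lambda>n. sqrt ((LINT x|M. (d n x)\<^sup>2) * (LINT x|M. (1::real)\<^sup>2))) \<longlonglongrightarrow> 0" by simp
  moreover have "eventually (\<lambda>n. norm (LINT x|M. norm (d n x)) \<le> sqrt ((LINT x|M. (d n x)\<^sup>2) * (LINT x|M. (1::real)\<^sup>2))) sequentially"
    using bnd by (intro always_eventually allI)
  ultimately have "(\<lambda>n. LINT x|M. norm (d n x)) \<longlonglongrightarrow> 0"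
    by (simp add: Lim_null_comparison)
  then obtain s where s: "strict_mono s" "AE x in M. (\<lambda>n. d (s n) x) \<longlonglongrightarrow> 0"
    using tendsto_L1_AE_subseq[of M d, OF dint] by blast
  have "AE x in M. (\<lambda>n. h (s n) x) \<longlonglongrightarrow> h0 x"
    using s(2) by eventually_elim (simp add: d_def LIM_zero_iff)
  thus ?thesis using s(1) by blast
qed

lemma Fatou_integral_le_lim:
  fixes h :: "nat \<Rightarrow> 'a \<Rightarrow> real" and g :: "'a \<Rightarrow> real" and U :: "nat \<Rightarrow> real"
  assumes hm: "\<And>n. h n \<in> borel_measurable N" and hi: "\<And>n. integrable N (h n)"
    and hnn: "\<And>n x. 0 \<le> h n x" and gi: "integrable N g" and gnn: "\<And>x. 0 \<le> g x"
    and ae: "AE x in N. ennreal (g x) \<le> liminf (\<lambda>n. ennreal (h n x))"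
    and U: "\<And>n. (LINT x|N. h n x) \<le> U n" and Ulim: "U \<longlonglongrightarrow> T"
  shows "(LINT x|N. g x) \<le> T"
proof -
  have T0: "T \<ge> 0"
  proof (rule LIMSEQ_le_const[OF Ulim], intro exI allI impI)
    fix n :: nat
    have "0 \<le> (LINT x|N. h n x)" by (rule integral_nonneg_AE) (simp add: hnn)
    thus "0 \<le> U n" using U[of n] by linarith
  qed
  have "ennreal (LINT x|N. g x) = (\<integral>\<^sup>+ x. ennreal (g x) \<partial>N)"
    by (rule nn_integral_eq_integral[symmetric]) (use gi gnn in auto)
  also have "\<dots> \<le> (\<integral>\<^sup>+ x. liminf (\<lambda>n. ennreal (h n x)) \<partial>N)"
    by (rule nn_integral_mono_AE[OF ae])
  also have "\<dots> \<le> liminf (\<lambda>n. \<integral>\<^sup>+ x. ennreal (h n x) \<partial>N)"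
    by (rule nn_integral_liminf) (use hm in simp)
  also have "(\<lambda>n. \<integral>\<^sup>+ x. ennreal (h n x) \<partial>N) = (\<lambda>n. ennreal (LINT x|N. h n x))"
    by (rule ext, rule nn_integral_eq_integral) (use hi hnn in auto)
  also have "liminf (\<lambda>n. ennreal (LINT x|N. h n x)) \<le> liminf (\<lambda>n. ennreal (U n))"
    by (rule Liminf_mono) (use U in \<open>auto intro!: always_eventually ennreal_leI\<close>)
  also have "\<dots> = ennreal T" by (rule lim_imp_Liminf) (use Ulim in auto)
  finally show ?thesis using T0 by simp
qed

section \<open>Functions of \<open>V\<close> as elements of \<open>L\<^sup>2(\<Omega>)\<close>\<close>

locale L2_embedding =
  fixes \<Omega> :: "'d::euclidean_space set" and \<iota> :: "'v::{real_inner,complete_space} \<Rightarrow> 'd \<Rightarrow> real"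
  assumes finite_measure_\<Omega>: "finite_measure (lebesgue_on \<Omega>)" and emb: "compact_dense_embedding \<Omega> \<iota>"
begin

abbreviation "M \<equiv> lebesgue_on \<Omega>"

sublocale finite_measure M by (rule finite_measure_\<Omega>)

lemmas embD = emb[unfolded compact_dense_embedding_def]

lemma iota_lin: "\<iota> (a *\<^sub>R u + b *\<^sub>R w) x = a * \<iota> u x + b * \<iota> w x"
  using conjunct1[OF embD] by blast

lemma iota_add: "\<iota> (u + w) x = \<iota> u x + \<iota> w x"
  using iota_lin[of 1 u 1 w x] by simp

lemma iota_scale: "\<iota> (a *\<^sub>R u) x = a * \<iota> u x"
  using iota_lin[of a u 0 u x] by simp

lemma iota_square_integrable: "sq_integrable_on \<Omega> (\<iota> u)"
  using conjunct1[OF conjunct2[OF embD]] by blast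

lemma iota_meas[measurable]: "\<iota> u \<in> borel_measurable M"
  using iota_square_integrable unfolding sq_integrable_on_def by blast

lemma iota_sq: "integrable M (\<lambda>x. (\<iota> u x)\<^sup>2)"
  using iota_square_integrable unfolding sq_integrable_on_def by blast

lemma embedding_const_exists: "\<exists>C\<ge>0. \<forall>u. (LINT x|M. (\<iota> u x)\<^sup>2) \<le> C * (norm u)\<^sup>2"
proof -
  obtain C where C: "\<And>u. L2dist2 \<Omega> (\<iota> u) (\<lambda>_. 0) \<le> C * (norm u)\<^sup>2"
    using conjunct1[OF conjunct2[OF conjunct2[OF conjunct2[OF embD]]]] by blast
  have "(LINT x|M. (\<iota> u x)\<^sup>2) \<le> max C 0 * (norm u)\<^sup>2" for u
  proof -
    have "(LINT x|M. (\<iota> u x)\<^sup>2) \<le> C * (norm u)\<^sup>2" using C[of u] unfolding L2dist2_def by simp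
    also have "\<dots> \<le> max C 0 * (norm u)\<^sup>2" by (rule mult_right_mono) auto
    finally show ?thesis .
  qed
  thus ?thesis by (intro exI[of _ "max C 0"]) auto
qed

definition embedding_const where "embedding_const = (SOME C. C \<ge> 0 \<and> (\<forall>u. (LINT x|M. (\<iota> u x)\<^sup>2) \<le> C * (norm u)\<^sup>2))"

lemma embedding_const: "embedding_const \<ge> 0" "(LINT x|M. (\<iota> u x)\<^sup>2) \<le> embedding_const * (norm u)\<^sup>2"
  using someI_ex[OF embedding_const_exists] unfolding embedding_const_def by blast+

definition wquad where "wquad a u = (LINT x|M. a x * (\<iota> u x * \<iota> u x))"
definition wform where "wform a u v = (LINT x|M. a x * (\<iota> u x * \<iota> v x))"

lemma wform_integrable:
  assumes "a \<in> borel_measurable M" "\<And>x. \<bar>a x\<bar> \<le> A"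
  shows "integrable M (\<lambda>x. a x * (\<iota> u x * \<iota> v x))"
  using integrable_bounded_mult_square_integrable[of "\<iota> u" M "\<iota> v" a A, OF iota_meas iota_meas iota_sq iota_sq assms]
  by (simp add: mult.assoc)

lemma wquad_expand:
  assumes "a \<in> borel_measurable M" "\<And>x. \<bar>a x\<bar> \<le> A"
  shows "wquad a (w + t *\<^sub>R v) = wquad a w + 2 * t * wform a w v + t\<^sup>2 * wquad a v"
proof -
  have "(\<lambda>x. a x * (\<iota> (w + t *\<^sub>R v) x * \<iota> (w + t *\<^sub>R v) x)) = (\<lambda>x. a x * (\<iota> w x * \<iota> w x) + (2 * t) * (a x * (\<iota> w x * \<iota> v x))
        + t\<^sup>2 * (a x * (\<iota> v x * \<iota> v x)))"
    unfolding iota_add iota_scale by (rule ext) (simp add: algebra_simps power2_eq_square)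
  hence "wquad a (w + t *\<^sub>R v) = (LINT x|M. a x * (\<iota> w x * \<iota> w x) + (2 * t) * (a x * (\<iota> w x * \<iota> v x))
        + t\<^sup>2 * (a x * (\<iota> v x * \<iota> v x)))"
    unfolding wquad_def by simp
  also have "\<dots> = wquad a w + 2 * t * wform a w v + t\<^sup>2 * wquad a v"
    unfolding wquad_def wform_def using wform_integrable[OF assms] by simp
  finally show ?thesis .
qed

lemma wquad_nonneg:
  assumes "\<And>x. a x \<ge> 0" shows "wquad a u \<ge> 0"
  unfolding wquad_def using assms by (intro integral_nonneg_AE) auto

lemma wquad_le:
  assumes "a \<in> borel_measurable M" "\<And>x. 0 \<le> a x" "\<And>x. a x \<le> A"
  shows "wquad a u \<le> A * embedding_const * (norm u)\<^sup>2"
proof -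
  have "wquad a u \<le> (LINT x|M. A * (\<iota> u x)\<^sup>2)"
    unfolding wquad_def
  proof (rule integral_mono)
    show "integrable M (\<lambda>x. a x * (\<iota> u x * \<iota> u x))" using wform_integrable[of a A u u] assms by auto
    show "integrable M (\<lambda>x. A * (\<iota> u x)\<^sup>2)" using iota_sq by simp
    show "a x * (\<iota> u x * \<iota> u x) \<le> A * (\<iota> u x)\<^sup>2" for x
      using assms by (simp add: power2_eq_square mult_right_mono)
  qed
  also have "\<dots> = A * (LINT x|M. (\<iota> u x)\<^sup>2)" by simp
  also have "\<dots> \<le> A * (embedding_const * (norm u)\<^sup>2)"
    using embedding_const assms(2,3)[of undefined] by (intro mult_left_mono) auto
  finally show ?thesis by simp
qed

lemma wform_Cauchy_Schwarz:
  assumes "a \<in> borel_measurable M" "\<And>x. 0 \<le> a x" "\<And>x. a x \<le> A"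
  shows "(wform a u v)\<^sup>2 \<le> wquad a u * wquad a v"
proof (rule quadratic_nonneg_discriminant)
  have ab: "\<bar>a x\<bar> \<le> A" for x using assms(2,3)[of x] by simp
  show "0 \<le> wquad a u + 2 * wform a u v * t + wquad a v * t\<^sup>2" for t
  proof -
    have "0 \<le> wquad a (u + t *\<^sub>R v)" by (rule wquad_nonneg[OF assms(2)])
    also have "\<dots> = wquad a u + 2 * t * wform a u v + t\<^sup>2 * wquad a v" by (rule wquad_expand[OF assms(1) ab])
    also have "\<dots> = wquad a u + 2 * wform a u v * t + wquad a v * t\<^sup>2" by (simp add: mult_ac)
    finally show "0 \<le> wquad a u + 2 * wform a u v * t + wquad a v * t\<^sup>2" .
  qed
  show "0 \<le> wquad a v" by (rule wquad_nonneg[OF assms(2)])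
qed

lemma wform_bound:
  assumes "a \<in> borel_measurable M" "\<And>x. 0 \<le> a x" "\<And>x. a x \<le> A"
  shows "\<bar>wform a u v\<bar> \<le> sqrt (wquad a u) * sqrt (A * embedding_const) * norm v"
proof -
  have "\<bar>wform a u v\<bar> \<le> sqrt (wquad a u * wquad a v)"
    using wform_Cauchy_Schwarz[OF assms, of u v] by (simp add: real_le_rsqrt)
  also have "\<dots> = sqrt (wquad a u) * sqrt (wquad a v)" by (simp add: real_sqrt_mult)
  also have "sqrt (wquad a v) \<le> sqrt (A * embedding_const * (norm v)\<^sup>2)" using wquad_le[OF assms] by simp
  hence "sqrt (wquad a u) * sqrt (wquad a v) \<le> sqrt (wquad a u) * sqrt (A * embedding_const * (norm v)\<^sup>2)"
    using wquad_nonneg[OF assms(2), where u=u] by (intro mult_left_mono) auto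
  also have "sqrt (A * embedding_const * (norm v)\<^sup>2) = sqrt (A * embedding_const) * norm v" by (simp add: real_sqrt_mult)
  finally show ?thesis by (simp add: mult.assoc)
qed


lemma iota_mult_integrable:
  assumes "g \<in> borel_measurable M" "integrable M (\<lambda>x. (g x)\<^sup>2)"
  shows "integrable M (\<lambda>x. \<iota> v x * g x)"
  by (rule integrable_mult_square_integrable[OF iota_meas assms(1) iota_sq assms(2)])

lemma weak_conv_iota_inner:
  assumes wc: "weak_conv u w" and g: "g \<in> borel_measurable M" "integrable M (\<lambda>x. (g x)\<^sup>2)"
  shows "(\<lambda>n. LINT x|M. \<iota> (u n) x * g x) \<longlonglongrightarrow> (LINT x|M. \<iota> w x * g x)"
proof -
  have "bounded_linear (\<lambda>v. LINT x|M. \<iota> v x * g x)"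
  proof (rule bounded_linear_intro)
    show "(LINT x|M. \<iota> (a + b) x * g x) = (LINT x|M. \<iota> a x * g x) + (LINT x|M. \<iota> b x * g x)" for a b
      unfolding iota_add distrib_right using iota_mult_integrable[OF g] by simp
    show "(LINT x|M. \<iota> (t *\<^sub>R a) x * g x) = t *\<^sub>R (LINT x|M. \<iota> a x * g x)" for t a
      unfolding iota_scale by (simp add: mult.assoc)
    show "norm (LINT x|M. \<iota> v x * g x) \<le> norm v * (sqrt embedding_const * sqrt (LINT x|M. (g x)\<^sup>2))" for v
    proof -
      have "(LINT x|M. \<iota> v x * g x)\<^sup>2 \<le> (LINT x|M. (\<iota> v x)\<^sup>2) * (LINT x|M. (g x)\<^sup>2)"
        by (rule Cauchy_Schwarz_integral[OF iota_meas g(1) iota_sq g(2)])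
      also have "\<dots> \<le> (embedding_const * (norm v)\<^sup>2) * (LINT x|M. (g x)\<^sup>2)"
        using embedding_const(2)[of v] by (intro mult_right_mono integral_nonneg_AE) auto
      finally have "\<bar>LINT x|M. \<iota> v x * g x\<bar> \<le> sqrt ((embedding_const * (norm v)\<^sup>2) * (LINT x|M. (g x)\<^sup>2))"
        by (metis real_sqrt_abs real_sqrt_le_mono)
      thus ?thesis by (simp add: real_sqrt_mult mult_ac)
    qed
  qed
  thus ?thesis by (rule weak_conv_bounded_linear[OF wc])
qed

lemma weak_conv_L2_limit_AE:
  assumes wc: "weak_conv u w" and f: "sq_integrable_on \<Omega> f"
    and lim: "(\<lambda>n. LINT x|M. (\<iota> (u n) x - f x)\<^sup>2) \<longlonglongrightarrow> 0"
  shows "AE x in M. f x = \<iota> w x"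
proof -
  have fm[measurable]: "f \<in> borel_measurable M" and f2: "integrable M (\<lambda>x. (f x)\<^sup>2)"
    using f unfolding sq_integrable_on_def by auto
  define g where "g x = f x - \<iota> w x" for x
  have gm[measurable]: "g \<in> borel_measurable M" unfolding g_def by measurable
  have g2: "integrable M (\<lambda>x. (g x)\<^sup>2)" unfolding g_def by (rule square_integrable_diff[OF fm iota_meas f2 iota_sq])
  have "(\<lambda>n. LINT x|M. \<iota> (u n) x * g x) \<longlonglongrightarrow> (LINT x|M. f x * g x)"
    by (rule L2_tendsto_imp_inner_tendsto[OF iota_meas fm gm iota_sq f2 g2 lim])
  moreover have "(\<lambda>n. LINT x|M. \<iota> (u n) x * g x) \<longlonglongrightarrow> (LINT x|M. \<iota> w x * g x)"
    by (rule weak_conv_iota_inner[OF wc gm g2])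
  ultimately have "(LINT x|M. f x * g x) = (LINT x|M. \<iota> w x * g x)" by (rule LIMSEQ_unique)
  moreover have "(LINT x|M. (g x)\<^sup>2) = (LINT x|M. f x * g x) - (LINT x|M. \<iota> w x * g x)"
    using integrable_mult_square_integrable[OF fm gm f2 g2] iota_mult_integrable[OF gm g2]
    unfolding g_def by (simp add: power2_eq_square left_diff_distrib)
  ultimately have "(LINT x|M. (g x)\<^sup>2) = 0" by simp
  hence "AE x in M. (g x)\<^sup>2 = 0" using integral_nonneg_eq_0_iff_AE[OF g2] by simp
  thus ?thesis by eventually_elim (simp add: g_def)
qed

lemma weak_conv_imp_L2_subseq:
  assumes wc: "weak_conv u w" and bd: "bounded (range u)"
  shows "\<exists>s. strict_mono s \<and> (\<lambda>n. LINT x|M. (\<iota> (u (s n)) x - \<iota> w x)\<^sup>2) \<longlonglongrightarrow> 0"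
proof -
  obtain s f where s: "strict_mono s" and f: "sq_integrable_on \<Omega> f"
    and lim: "(\<lambda>n. L2dist2 \<Omega> (\<iota> (u (s n))) f) \<longlonglongrightarrow> 0"
    using conjunct1[OF conjunct2[OF conjunct2[OF conjunct2[OF conjunct2[OF embD]]]]] bd by blast
  have [measurable]: "f \<in> borel_measurable M" using f unfolding sq_integrable_on_def by simp
  have lim': "(\<lambda>n. LINT x|M. (\<iota> ((u \<circ> s) n) x - f x)\<^sup>2) \<longlonglongrightarrow> 0" using lim unfolding L2dist2_def by simp
  have "AE x in M. f x = \<iota> w x" by (rule weak_conv_L2_limit_AE[OF weak_conv_subseq[OF wc s] f lim'])
  hence "(LINT x|M. (\<iota> (u (s n)) x - \<iota> w x)\<^sup>2) = (LINT x|M. (\<iota> (u (s n)) x - f x)\<^sup>2)" for n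
    by (intro integral_cong_AE) (auto elim: eventually_mono)
  thus ?thesis using s lim' by (auto simp: o_def)
qed

lemma weak_conv_common_AE_subseq:
  fixes a b :: "nat \<Rightarrow> 'v" and w :: 'v
  assumes wa: "weak_conv a w" and wb: "weak_conv b w"
    and ba: "bounded (range a)" and bb: "bounded (range b)"
  shows "\<exists>\<sigma>. strict_mono \<sigma> \<and> (AE x in M. (\<lambda>n. \<iota> (a (\<sigma> n)) x) \<longlonglongrightarrow> \<iota> w x)
              \<and> (AE x in M. (\<lambda>n. \<iota> (b (\<sigma> n)) x) \<longlonglongrightarrow> \<iota> w x)"
proof -
  obtain s1 where s1: "strict_mono s1" "(\<lambda>n. LINT x|M. (\<iota> (a (s1 n)) x - \<iota> w x)\<^sup>2) \<longlonglongrightarrow> 0"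
    using weak_conv_imp_L2_subseq[OF wa ba] by blast
  have wb1: "weak_conv (b \<circ> s1) w" by (rule weak_conv_subseq[OF wb s1(1)])
  have bb1: "bounded (range (b \<circ> s1))" using bb by (rule bounded_subset) auto
  obtain s2 where s2: "strict_mono s2" "(\<lambda>n. LINT x|M. (\<iota> ((b \<circ> s1) (s2 n)) x - \<iota> w x)\<^sup>2) \<longlonglongrightarrow> 0"
    using weak_conv_imp_L2_subseq[OF wb1 bb1] by blast
  have la2: "(\<lambda>n. LINT x|M. (\<iota> (a (s1 (s2 n))) x - \<iota> w x)\<^sup>2) \<longlonglongrightarrow> 0"
    using LIMSEQ_subseq_LIMSEQ[OF s1(2) s2(1)] by (simp add: o_def)
  obtain s3 where s3: "strict_mono s3" "AE x in M. (\<lambda>n. \<iota> (a (s1 (s2 (s3 n)))) x) \<longlonglongrightarrow> \<iota> w x"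
    using L2_tendsto_imp_AE_subseq[of "\<lambda>n. \<iota> (a (s1 (s2 n)))" "\<iota> w", OF iota_meas iota_sq iota_meas iota_sq la2] by blast
  have lb3: "(\<lambda>n. LINT x|M. (\<iota> (b (s1 (s2 (s3 n)))) x - \<iota> w x)\<^sup>2) \<longlonglongrightarrow> 0"
    using LIMSEQ_subseq_LIMSEQ[OF s2(2) s3(1)] by (simp add: o_def)
  obtain s4 where s4: "strict_mono s4" "AE x in M. (\<lambda>n. \<iota> (b (s1 (s2 (s3 (s4 n))))) x) \<longlonglongrightarrow> \<iota> w x"
    using L2_tendsto_imp_AE_subseq[of "\<lambda>n. \<iota> (b (s1 (s2 (s3 n))))" "\<iota> w", OF iota_meas iota_sq iota_meas iota_sq lb3] by blast
  define \<sigma> where "\<sigma> = s1 \<circ> s2 \<circ> s3 \<circ> s4"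
  have sm: "strict_mono \<sigma>" unfolding \<sigma>_def using s1(1) s2(1) s3(1) s4(1) by (intro strict_mono_o)
  have "AE x in M. (\<lambda>n. \<iota> (a (\<sigma> n)) x) \<longlonglongrightarrow> \<iota> w x"
    using s3(2)
  proof eventually_elim
    case (elim x)
    from LIMSEQ_subseq_LIMSEQ[OF elim s4(1)] show ?case by (simp add: \<sigma>_def o_def)
  qed
  moreover have "AE x in M. (\<lambda>n. \<iota> (b (\<sigma> n)) x) \<longlonglongrightarrow> \<iota> w x"
    using s4(2) by (simp add: \<sigma>_def o_def)
  ultimately show ?thesis using sm by blast
qed

lemma abs_iota_powr_integrable:
  assumes p: "0 < p" "p < 1"
  shows "integrable M (\<lambda>x. \<bar>\<iota> u x\<bar> powr p)"
proof (rule Bochner_Integration.integrable_bound)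
  show "integrable M (\<lambda>x. 1 + (\<iota> u x)\<^sup>2)" using iota_sq by simp
  show "AE x in M. norm (\<bar>\<iota> u x\<bar> powr p) \<le> norm (1 + (\<iota> u x)\<^sup>2)"
  proof (intro AE_I2)
    fix x
    have "\<bar>\<iota> u x\<bar> powr p = ((\<iota> u x)\<^sup>2) powr (p/2)"
    proof (cases "\<iota> u x = 0")
      case False
      hence sq: "(\<iota> u x)\<^sup>2 = \<bar>\<iota> u x\<bar> powr 2" by (simp add: powr_numeral)
      show ?thesis unfolding sq powr_powr by simp
    qed simp
    also have "\<dots> \<le> 1 + (\<iota> u x)\<^sup>2" using p by (intro powr_le_1_plus) auto
    finally show "norm (\<bar>\<iota> u x\<bar> powr p) \<le> norm (1 + (\<iota> u x)\<^sup>2)" by simp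
  qed
qed measurable

end

section \<open>The subproblems (Q)\<close>

context L2_embedding
begin

definition weight where "weight p \<epsilon> uk x = dpsi p \<epsilon> ((\<iota> uk x)\<^sup>2)"

lemma weight_measurable[measurable]: "weight p \<epsilon> uk \<in> borel_measurable M"
  unfolding weight_def by measurable

context
  fixes p \<epsilon> :: real
  assumes p: "0 < p" "p < 1" and e: "\<epsilon> > 0"
begin

lemma weight_nonneg: "0 \<le> weight p \<epsilon> uk x" unfolding weight_def using dpsi_bounds(1)[OF e _ p] by (simp add: less_imp_le)
lemma weight_le: "weight p \<epsilon> uk x \<le> p/2 * \<epsilon> powr (p - 2)" unfolding weight_def using dpsi_bounds(2)[OF e _ p] by simp
lemma weight_abs_le: "\<bar>weight p \<epsilon> uk x\<bar> \<le> p/2 * \<epsilon> powr (p - 2)" using weight_nonneg weight_le by simp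

lemma psi_iota_integrable: "integrable M (\<lambda>x. psi p \<epsilon> ((\<iota> u x)\<^sup>2))"
proof (rule Bochner_Integration.integrable_bound)
  show "integrable M (\<lambda>x. \<epsilon> powr p + 1 + (\<iota> u x)\<^sup>2)"
    by (intro Bochner_Integration.integrable_add integrable_const iota_sq)
  show "(\<lambda>x. psi p \<epsilon> ((\<iota> u x)\<^sup>2)) \<in> borel_measurable M" by measurable
  show "AE x in M. norm (psi p \<epsilon> ((\<iota> u x)\<^sup>2)) \<le> norm (\<epsilon> powr p + 1 + (\<iota> u x)\<^sup>2)"
  proof (intro AE_I2)
    fix x
    have "0 \<le> psi p \<epsilon> ((\<iota> u x)\<^sup>2)" using psi_nonneg[OF e _ p] by simp
    moreover have "psi p \<epsilon> ((\<iota> u x)\<^sup>2) \<le> \<epsilon> powr p + 1 + (\<iota> u x)\<^sup>2" using psi_le_affine[OF e _ p] by simp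
    moreover have "0 \<le> \<epsilon> powr p + 1 + (\<iota> u x)\<^sup>2" by (simp add: add_nonneg_nonneg)
    ultimately show "norm (psi p \<epsilon> ((\<iota> u x)\<^sup>2)) \<le> norm (\<epsilon> powr p + 1 + (\<iota> u x)\<^sup>2)" by simp
  qed
qed

lemma weight_mult_integrable: "integrable M (\<lambda>x. weight p \<epsilon> uk x * (\<iota> u x * \<iota> v x))"
  by (rule wform_integrable[OF weight_measurable weight_abs_le])

lemma Qobj_eq:
  "Qobj \<Omega> \<iota> F F' \<alpha> \<beta> p \<epsilon> uk L u =
     F uk + F' uk (u - uk) + L / 2 * (norm (u - uk))\<^sup>2 + \<alpha> / 2 * (norm u)\<^sup>2 +
     \<beta> * ((LINT x|M. psi p \<epsilon> ((\<iota> uk x)\<^sup>2)) - wquad (weight p \<epsilon> uk) uk) + \<beta> * wquad (weight p \<epsilon> uk) u"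
proof -
  have "(\<lambda>x. psi p \<epsilon> ((\<iota> uk x)\<^sup>2) + dpsi p \<epsilon> ((\<iota> uk x)\<^sup>2) * ((\<iota> u x)\<^sup>2 - (\<iota> uk x)\<^sup>2))
      = (\<lambda>x. (psi p \<epsilon> ((\<iota> uk x)\<^sup>2) - weight p \<epsilon> uk x * (\<iota> uk x * \<iota> uk x)) + weight p \<epsilon> uk x * (\<iota> u x * \<iota> u x))"
    unfolding weight_def by (rule ext) (simp add: algebra_simps power2_eq_square)
  hence "(LINT x|M. psi p \<epsilon> ((\<iota> uk x)\<^sup>2) + dpsi p \<epsilon> ((\<iota> uk x)\<^sup>2) * ((\<iota> u x)\<^sup>2 - (\<iota> uk x)\<^sup>2))
     = (LINT x|M. (psi p \<epsilon> ((\<iota> uk x)\<^sup>2) - weight p \<epsilon> uk x * (\<iota> uk x * \<iota> uk x)) + weight p \<epsilon> uk x * (\<iota> u x * \<iota> u x))"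
    by simp
  also have "\<dots> = (LINT x|M. psi p \<epsilon> ((\<iota> uk x)\<^sup>2) - weight p \<epsilon> uk x * (\<iota> uk x * \<iota> uk x)) + wquad (weight p \<epsilon> uk) u"
    unfolding wquad_def
    by (rule Bochner_Integration.integral_add) (use psi_iota_integrable weight_mult_integrable in auto)
  also have "(LINT x|M. psi p \<epsilon> ((\<iota> uk x)\<^sup>2) - weight p \<epsilon> uk x * (\<iota> uk x * \<iota> uk x))
      = (LINT x|M. psi p \<epsilon> ((\<iota> uk x)\<^sup>2)) - wquad (weight p \<epsilon> uk) uk"
    unfolding wquad_def
    by (rule Bochner_Integration.integral_diff) (use psi_iota_integrable weight_mult_integrable in auto)
  finally have I: "(LINT x|M. psi p \<epsilon> ((\<iota> uk x)\<^sup>2) + dpsi p \<epsilon> ((\<iota> uk x)\<^sup>2) * ((\<iota> u x)\<^sup>2 - (\<iota> uk x)\<^sup>2))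
     = (LINT x|M. psi p \<epsilon> ((\<iota> uk x)\<^sup>2)) - wquad (weight p \<epsilon> uk) uk + wquad (weight p \<epsilon> uk) u" .
  show ?thesis unfolding Qobj_def I by (simp add: algebra_simps)
qed

definition Qderiv :: "('v \<Rightarrow> 'v \<Rightarrow>\<^sub>L real) \<Rightarrow> real \<Rightarrow> real \<Rightarrow> 'v \<Rightarrow> real \<Rightarrow> 'v \<Rightarrow> 'v \<Rightarrow> real" where "Qderiv F' \<alpha> \<beta> uk L w v =
   F' uk v + L * inner (w - uk) v + \<alpha> * inner w v + 2 * \<beta> * wform (weight p \<epsilon> uk) w v"
definition Qquad where "Qquad \<alpha> \<beta> uk L v = (L + \<alpha>) / 2 * (norm v)\<^sup>2 + \<beta> * wquad (weight p \<epsilon> uk) v"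

lemma Qobj_quadratic_expansion:
  "quadratic_expansion (Qobj \<Omega> \<iota> F F' \<alpha> \<beta> p \<epsilon> uk L) (Qderiv F' \<alpha> \<beta> uk L) (Qquad \<alpha> \<beta> uk L)"
  unfolding quadratic_expansion_def
proof (intro allI)
  fix w v t
  have n1: "(norm (w + t *\<^sub>R v - uk))\<^sup>2 = (norm (w - uk))\<^sup>2 + 2 * t * inner (w - uk) v + t\<^sup>2 * (norm v)\<^sup>2"
    using power2_norm_add_scaleR[of "w - uk" t v] by (simp add: algebra_simps)
  have n2: "(norm (w + t *\<^sub>R v))\<^sup>2 = (norm w)\<^sup>2 + 2 * t * inner w v + t\<^sup>2 * (norm v)\<^sup>2"
    by (rule power2_norm_add_scaleR)
  have f: "F' uk (w + t *\<^sub>R v - uk) = F' uk (w - uk) + t * F' uk v"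
    by (simp add: blinfun.bilinear_simps algebra_simps)
  have q: "wquad (weight p \<epsilon> uk) (w + t *\<^sub>R v) = wquad (weight p \<epsilon> uk) w + 2 * t * wform (weight p \<epsilon> uk) w v + t\<^sup>2 * wquad (weight p \<epsilon> uk) v"
    by (rule wquad_expand[OF weight_measurable weight_abs_le])
  show "Qobj \<Omega> \<iota> F F' \<alpha> \<beta> p \<epsilon> uk L (w + t *\<^sub>R v) =
    Qobj \<Omega> \<iota> F F' \<alpha> \<beta> p \<epsilon> uk L w + t * Qderiv F' \<alpha> \<beta> uk L w v + t\<^sup>2 * Qquad \<alpha> \<beta> uk L v"
    unfolding Qobj_eq n1 n2 f q Qderiv_def Qquad_def by (simp add: algebra_simps)
qed

lemma Qderiv_bounded: "\<exists>K. \<forall>v. \<bar>Qderiv F' \<alpha> \<beta> uk L w v\<bar> \<le> K * norm v"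
proof (intro exI allI)
  fix v
  have b1: "\<bar>F' uk v\<bar> \<le> norm (F' uk) * norm v" using norm_blinfun[of "F' uk" v] by simp
  have b2: "\<bar>L * inner (w - uk) v\<bar> \<le> \<bar>L\<bar> * norm (w - uk) * norm v"
    using Cauchy_Schwarz_ineq2[of "w - uk" v] by (simp add: abs_mult mult.assoc mult_left_mono)
  have b3: "\<bar>\<alpha> * inner w v\<bar> \<le> \<bar>\<alpha>\<bar> * norm w * norm v"
    using Cauchy_Schwarz_ineq2[of w v] by (simp add: abs_mult mult.assoc mult_left_mono)
  have "\<bar>wform (weight p \<epsilon> uk) w v\<bar> \<le> sqrt (wquad (weight p \<epsilon> uk) w) * sqrt (p/2 * \<epsilon> powr (p - 2) * embedding_const) * norm v"
    by (rule wform_bound[OF weight_measurable weight_nonneg weight_le])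
  hence b4: "\<bar>2 * \<beta> * wform (weight p \<epsilon> uk) w v\<bar> \<le> \<bar>2 * \<beta>\<bar> * (sqrt (wquad (weight p \<epsilon> uk) w) * sqrt (p/2 * \<epsilon> powr (p - 2) * embedding_const) * norm v)"
    by (simp add: abs_mult mult_left_mono)
  have "\<bar>Qderiv F' \<alpha> \<beta> uk L w v\<bar> \<le> \<bar>F' uk v\<bar> + \<bar>L * inner (w - uk) v\<bar> + \<bar>\<alpha> * inner w v\<bar> + \<bar>2 * \<beta> * wform (weight p \<epsilon> uk) w v\<bar>"
    unfolding Qderiv_def by linarith
  also have "\<dots> \<le> (norm (F' uk) + \<bar>L\<bar> * norm (w - uk) + \<bar>\<alpha>\<bar> * norm w + \<bar>2 * \<beta>\<bar> * (sqrt (wquad (weight p \<epsilon> uk) w) * sqrt (p/2 * \<epsilon> powr (p - 2) * embedding_const))) * norm v"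
    using b1 b2 b3 b4 by (simp add: algebra_simps)
  finally show "\<bar>Qderiv F' \<alpha> \<beta> uk L w v\<bar> \<le> (norm (F' uk) + \<bar>L\<bar> * norm (w - uk) + \<bar>\<alpha>\<bar> * norm w + \<bar>2 * \<beta>\<bar> * (sqrt (wquad (weight p \<epsilon> uk) w) * sqrt (p/2 * \<epsilon> powr (p - 2) * embedding_const))) * norm v" .
qed

lemma Qobj_has_minimizer:
  assumes "L \<ge> 0" "\<alpha> > 0" "\<beta> > 0"
  shows "\<exists>w. is_minimizer (Qobj \<Omega> \<iota> F F' \<alpha> \<beta> p \<epsilon> uk L) w"
proof (rule quadratic_expansion_has_minimizer[OF Qobj_quadratic_expansion])
  define A where "A = p/2 * \<epsilon> powr (p - 2)"
  show "\<alpha>/2 * (norm v)\<^sup>2 \<le> Qquad \<alpha> \<beta> uk L v" for v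
  proof -
    have "0 \<le> \<beta> * wquad (weight p \<epsilon> uk) v" using assms wquad_nonneg[OF weight_nonneg] by simp
    moreover have "\<alpha>/2 * (norm v)\<^sup>2 \<le> (L + \<alpha>)/2 * (norm v)\<^sup>2" using assms by (intro mult_right_mono) auto
    ultimately show ?thesis unfolding Qquad_def by linarith
  qed
  show "\<alpha>/2 > 0" using assms by simp
  show "Qquad \<alpha> \<beta> uk L v \<le> ((L + \<alpha>)/2 + \<beta> * (A * embedding_const)) * (norm v)\<^sup>2" for v
  proof -
    have "wquad (weight p \<epsilon> uk) v \<le> A * embedding_const * (norm v)\<^sup>2" unfolding A_def
      by (rule wquad_le[OF weight_measurable weight_nonneg weight_le])
    hence "\<beta> * wquad (weight p \<epsilon> uk) v \<le> \<beta> * (A * embedding_const * (norm v)\<^sup>2)" using assms by (intro mult_left_mono) auto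
    thus ?thesis unfolding Qquad_def by (simp add: algebra_simps)
  qed
  show "\<exists>K. \<forall>v. \<bar>Qderiv F' \<alpha> \<beta> uk L w v\<bar> \<le> K * norm v" for w by (rule Qderiv_bounded)
qed

lemma Qobj_minimizer:
  assumes "is_minimizer (Qobj \<Omega> \<iota> F F' \<alpha> \<beta> p \<epsilon> uk L) w"
  shows "Qderiv F' \<alpha> \<beta> uk L w v = 0"
    and "Qobj \<Omega> \<iota> F F' \<alpha> \<beta> p \<epsilon> uk L z = Qobj \<Omega> \<iota> F F' \<alpha> \<beta> p \<epsilon> uk L w + Qquad \<alpha> \<beta> uk L (z - w)"
  by (rule quadratic_expansion_minimizer[OF Qobj_quadratic_expansion assms])+

definition Jeps :: "('v \<Rightarrow> real) \<Rightarrow> real \<Rightarrow> real \<Rightarrow> 'v \<Rightarrow> real" where "Jeps F \<alpha> \<beta> u = F u + \<alpha> / 2 * (norm u)\<^sup>2 + \<beta> * (LINT x|M. psi p \<epsilon> ((\<iota> u x)\<^sup>2))"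

lemma Qobj_center: "Qobj \<Omega> \<iota> F F' \<alpha> \<beta> p \<epsilon> uk L uk = Jeps F \<alpha> \<beta> uk"
  unfolding Qobj_def Jeps_def by simp

lemma Qobj_lower_bound:
  fixes F' :: "'v \<Rightarrow> 'v \<Rightarrow>\<^sub>L real"
  assumes "L \<ge> 0" "\<beta> > 0"
  shows "F uk + F' uk (w - uk) + \<alpha> / 2 * (norm w)\<^sup>2 \<le> Qobj \<Omega> \<iota> F F' \<alpha> \<beta> p \<epsilon> uk L w"
proof -
  have "0 \<le> (LINT x|M. psi p \<epsilon> ((\<iota> uk x)\<^sup>2) + dpsi p \<epsilon> ((\<iota> uk x)\<^sup>2) * ((\<iota> w x)\<^sup>2 - (\<iota> uk x)\<^sup>2))"
  proof (rule integral_nonneg_AE, intro AE_I2)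
    fix x
    have "psi p \<epsilon> ((\<iota> w x)\<^sup>2) \<le> psi p \<epsilon> ((\<iota> uk x)\<^sup>2) + dpsi p \<epsilon> ((\<iota> uk x)\<^sup>2) * ((\<iota> w x)\<^sup>2 - (\<iota> uk x)\<^sup>2)"
      by (rule psi_le_linearization[OF e _ _ p]) auto
    moreover have "0 \<le> psi p \<epsilon> ((\<iota> w x)\<^sup>2)" by (rule psi_nonneg[OF e _ p]) simp
    ultimately show "0 \<le> psi p \<epsilon> ((\<iota> uk x)\<^sup>2) + dpsi p \<epsilon> ((\<iota> uk x)\<^sup>2) * ((\<iota> w x)\<^sup>2 - (\<iota> uk x)\<^sup>2)" by linarith
  qed
  moreover have "0 \<le> L / 2 * (norm (w - uk))\<^sup>2" using assms by simp
  ultimately show ?thesis unfolding Qobj_def using assms by simp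
qed

lemma Jeps_le_Qobj:
  fixes F' :: "'v \<Rightarrow> 'v \<Rightarrow>\<^sub>L real"
  assumes "Dcond F F' uk L w" and that: "\<beta> > 0"
  shows "Jeps F \<alpha> \<beta> w \<le> Qobj \<Omega> \<iota> F F' \<alpha> \<beta> p \<epsilon> uk L w + L / 2 * (norm (w - uk))\<^sup>2"
proof -
  have "(LINT x|M. psi p \<epsilon> ((\<iota> w x)\<^sup>2)) \<le> (LINT x|M. psi p \<epsilon> ((\<iota> uk x)\<^sup>2) + dpsi p \<epsilon> ((\<iota> uk x)\<^sup>2) * ((\<iota> w x)\<^sup>2 - (\<iota> uk x)\<^sup>2))"
  proof (rule integral_mono)
    show "integrable M (\<lambda>x. psi p \<epsilon> ((\<iota> w x)\<^sup>2))" by (rule psi_iota_integrable)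
    have "(\<lambda>x. psi p \<epsilon> ((\<iota> uk x)\<^sup>2) + dpsi p \<epsilon> ((\<iota> uk x)\<^sup>2) * ((\<iota> w x)\<^sup>2 - (\<iota> uk x)\<^sup>2))
      = (\<lambda>x. (psi p \<epsilon> ((\<iota> uk x)\<^sup>2) - weight p \<epsilon> uk x * (\<iota> uk x * \<iota> uk x)) + weight p \<epsilon> uk x * (\<iota> w x * \<iota> w x))"
      unfolding weight_def by (rule ext) (simp add: algebra_simps power2_eq_square)
    moreover have "integrable M (\<lambda>x. (psi p \<epsilon> ((\<iota> uk x)\<^sup>2) - weight p \<epsilon> uk x * (\<iota> uk x * \<iota> uk x)) + weight p \<epsilon> uk x * (\<iota> w x * \<iota> w x))"
      using psi_iota_integrable weight_mult_integrable by auto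
    ultimately show "integrable M (\<lambda>x. psi p \<epsilon> ((\<iota> uk x)\<^sup>2) + dpsi p \<epsilon> ((\<iota> uk x)\<^sup>2) * ((\<iota> w x)\<^sup>2 - (\<iota> uk x)\<^sup>2))"
      by simp
    show "psi p \<epsilon> ((\<iota> w x)\<^sup>2) \<le> psi p \<epsilon> ((\<iota> uk x)\<^sup>2) + dpsi p \<epsilon> ((\<iota> uk x)\<^sup>2) * ((\<iota> w x)\<^sup>2 - (\<iota> uk x)\<^sup>2)" for x
      by (rule psi_le_linearization[OF e _ _ p]) auto
  qed
  hence "\<beta> * (LINT x|M. psi p \<epsilon> ((\<iota> w x)\<^sup>2)) \<le> \<beta> * (LINT x|M. psi p \<epsilon> ((\<iota> uk x)\<^sup>2) + dpsi p \<epsilon> ((\<iota> uk x)\<^sup>2) * ((\<iota> w x)\<^sup>2 - (\<iota> uk x)\<^sup>2))"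
    using that by (intro mult_left_mono) auto
  moreover have "F w \<le> F uk + F' uk (w - uk) + L * (norm (w - uk))\<^sup>2" using assms(1) unfolding Dcond_def .
  ultimately show ?thesis unfolding Jeps_def Qobj_def by linarith
qed

end
end

section \<open>Runs of Algorithm A\<close>

lemma Lset_divide:
  assumes L: "L \<in> Lset Lt \<gamma>" and gt: "L > Lt" and Lt: "Lt > 0"
  shows "L / \<gamma> \<in> Lset Lt \<gamma>"
proof -
  obtain l where l: "L = Lt * \<gamma> ^ l" using L gt Lt unfolding Lset_def by auto
  with gt obtain i where "l = Suc i" by (cases l) auto
  hence "L / \<gamma> = Lt * \<gamma> ^ i" using l gt Lt by auto
  thus ?thesis unfolding Lset_def by auto
qed

locale algorithmA_run = L2_embedding \<Omega> \<iota>
  for \<Omega> :: "'d::euclidean_space set" and \<iota> :: "'v::{real_inner,complete_space} \<Rightarrow> 'd \<Rightarrow> real" +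
  fixes F :: "'v \<Rightarrow> real" and F' :: "'v \<Rightarrow> ('v \<Rightarrow>\<^sub>L real)"
    and \<alpha> \<beta> p \<gamma> Lt :: real and \<epsilon> :: "nat \<Rightarrow> real" and u0 :: 'v
    and L :: "nat \<Rightarrow> real" and u :: "nat \<Rightarrow> 'v"
  assumes AI: "assumption_I_F F F'"
    and \<alpha>_pos: "\<alpha> > 0" and \<beta>_pos: "\<beta> > 0" and p_range: "0 < p" "p < 1"
    and \<epsilon>_decseq: "decseq \<epsilon>" and \<epsilon>_pos: "\<And>k. \<epsilon> k > 0" and \<epsilon>_tendsto: "\<epsilon> \<longlonglongrightarrow> 0"
    and \<gamma>_gt1: "\<gamma> > 1" and Lt_pos: "Lt > 0"
    and alg: "algorithmA \<Omega> \<iota> F F' \<alpha> \<beta> p \<epsilon> \<gamma> Lt u0 L u"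
begin

lemma u_Suc_minimizer: "is_minimizer (Qobj \<Omega> \<iota> F F' \<alpha> \<beta> p (\<epsilon> k) (u k) (L k)) (u (Suc k))"
  and u_Suc_Dcond: "Dcond F F' (u k) (L k) (u (Suc k))"
  and L_in_Lset: "L k \<in> Lset Lt \<gamma>"
  and L_minimal: "L' \<in> Lset Lt \<gamma> \<Longrightarrow> L' < L k \<Longrightarrow>
     is_minimizer (Qobj \<Omega> \<iota> F F' \<alpha> \<beta> p (\<epsilon> k) (u k) L') w \<Longrightarrow> \<not> Dcond F F' (u k) L' w"
  using alg unfolding algorithmA_def by blast+

lemma L_nonneg: "L k \<ge> 0"
  using L_in_Lset[of k] Lt_pos \<gamma>_gt1 unfolding Lset_def by auto

lemma F_derivative: "(F has_derivative blinfun_apply (F' y)) (at y)"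
  and F'_completely_continuous: "weak_conv a w \<Longrightarrow> (\<lambda>n. F' (a n)) \<longlonglongrightarrow> F' w"
  and F'_lipschitz_on_bounded: "bounded B \<Longrightarrow> \<exists>M. lipschitz_on M B F'"
  using AI unfolding assumption_I_F_def standing_F_def by blast+

lemma F_lower_bound: "\<exists>c K. K \<ge> 0 \<and> (\<forall>v. c - K * norm v \<le> F v)"
proof -
  obtain l c where l: "bounded_linear l" "\<And>v. l v + c \<le> F v"
    using AI unfolding assumption_I_F_def standing_F_def bounded_below_affine_def by blast
  obtain K where K: "K \<ge> 0" "\<And>v. norm (l v) \<le> norm v * K" using bounded_linear.nonneg_bounded[OF l(1)] by blast
  have "c - K * norm v \<le> F v" for v using l(2)[of v] K(2)[of v] by (simp add: abs_le_iff mult.commute)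
  thus ?thesis using K(1) by blast
qed

definition energy :: "nat \<Rightarrow> real" where
  "energy k = Jeps p (\<epsilon> k) F \<alpha> \<beta> (u k)"

lemma energy_decrease: "energy (Suc k) + \<alpha>/2 * (norm (u (Suc k) - u k))\<^sup>2 \<le> energy k"
proof -
  let ?Q = "Qobj \<Omega> \<iota> F F' \<alpha> \<beta> p (\<epsilon> k) (u k) (L k)"
  have "?Q (u k) = ?Q (u (Suc k)) + Qquad p (\<epsilon> k) \<alpha> \<beta> (u k) (L k) (u k - u (Suc k))"
    by (rule Qobj_minimizer(2)[OF p_range \<epsilon>_pos u_Suc_minimizer])
  moreover have "?Q (u k) = energy k"
    unfolding energy_def by (rule Qobj_center[OF p_range \<epsilon>_pos])
  moreover have "Jeps p (\<epsilon> k) F \<alpha> \<beta> (u (Suc k)) \<le> ?Q (u (Suc k)) + L k / 2 * (norm (u (Suc k) - u k))\<^sup>2"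
    by (rule Jeps_le_Qobj[OF p_range \<epsilon>_pos u_Suc_Dcond \<beta>_pos])
  moreover have "0 \<le> wquad (weight p (\<epsilon> k) (u k)) (u k - u (Suc k))"
    by (rule wquad_nonneg[OF weight_nonneg[OF p_range \<epsilon>_pos]])
  hence "Qquad p (\<epsilon> k) \<alpha> \<beta> (u k) (L k) (u k - u (Suc k)) \<ge> (L k + \<alpha>)/2 * (norm (u (Suc k) - u k))\<^sup>2"
    using \<beta>_pos unfolding Qquad_def[OF p_range \<epsilon>_pos] by (simp add: norm_minus_commute)
  moreover have "energy (Suc k) \<le> Jeps p (\<epsilon> k) F \<alpha> \<beta> (u (Suc k))"
  proof -
    have "(LINT x|M. psi p (\<epsilon> (Suc k)) ((\<iota> (u (Suc k)) x)\<^sup>2)) \<le> (LINT x|M. psi p (\<epsilon> k) ((\<iota> (u (Suc k)) x)\<^sup>2))"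
      using \<epsilon>_decseq \<epsilon>_pos p_range
      by (intro integral_mono psi_iota_integrable psi_mono_eps) (auto simp: decseq_Suc_iff)
    thus ?thesis using \<beta>_pos unfolding energy_def Jeps_def[OF p_range \<epsilon>_pos] by simp
  qed
  moreover have "(L k + \<alpha>)/2 * (norm (u (Suc k) - u k))\<^sup>2
      = L k / 2 * (norm (u (Suc k) - u k))\<^sup>2 + \<alpha>/2 * (norm (u (Suc k) - u k))\<^sup>2"
    by (simp add: field_simps)
  ultimately show ?thesis by linarith
qed

lemma energy_plus_steps_le: "energy k + \<alpha>/2 * (\<Sum>i<k. (norm (u (Suc i) - u i))\<^sup>2) \<le> energy 0"
proof (induction k)
  case (Suc k)
  thus ?case using energy_decrease[of k] by (simp add: algebra_simps)
qed simp

lemma energy_le_initial: "energy k \<le> energy 0"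
proof -
  have "0 \<le> \<alpha>/2 * (\<Sum>i<k. (norm (u (Suc i) - u i))\<^sup>2)"
    using \<alpha>_pos by (intro mult_nonneg_nonneg sum_nonneg) auto
  thus ?thesis using energy_plus_steps_le[of k] by linarith
qed

lemma Jeps_coercive: "\<exists>c K. \<forall>e v. e > 0 \<longrightarrow> c - K * norm v + \<alpha>/2 * (norm v)\<^sup>2 \<le> Jeps p e F \<alpha> \<beta> v"
proof -
  obtain c K where FK: "\<And>v. c - K * norm v \<le> F v" using F_lower_bound by blast
  have "c - K * norm v + \<alpha>/2 * (norm v)\<^sup>2 \<le> Jeps p e F \<alpha> \<beta> v" if e: "e > 0" for e v
  proof -
    have "0 \<le> (LINT x|M. psi p e ((\<iota> v x)\<^sup>2))"
      by (rule integral_nonneg_AE) (use psi_nonneg[OF e _ p_range] in auto)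
    hence "0 \<le> \<beta> * (LINT x|M. psi p e ((\<iota> v x)\<^sup>2))" using \<beta>_pos by simp
    thus ?thesis unfolding Jeps_def[OF p_range e] using FK[of v] by linarith
  qed
  thus ?thesis by blast
qed

lemma iterates_bounded: "\<exists>R. \<forall>k. norm (u k) \<le> R"
proof -
  obtain c K where J: "\<And>e v. e > 0 \<Longrightarrow> c - K * norm v + \<alpha>/2 * (norm v)\<^sup>2 \<le> Jeps p e F \<alpha> \<beta> v"
    using Jeps_coercive by blast
  have "\<alpha>/2 * (norm (u k))\<^sup>2 - K * norm (u k) \<le> energy 0 - c" for k
    using J[OF \<epsilon>_pos[of k], of "u k"] energy_le_initial[of k] unfolding energy_def by linarith
  hence "norm (u k) \<le> 1 + 2 * \<bar>K\<bar> / (\<alpha>/2) + 2 * \<bar>energy 0 - c\<bar> / (\<alpha>/2)" for k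
    using \<alpha>_pos by (intro quadratic_growth_bound) auto
  thus ?thesis by blast
qed

lemma steps_tendsto_0: "(\<lambda>k. norm (u (Suc k) - u k)) \<longlonglongrightarrow> 0"
proof -
  obtain c K where J: "\<And>e v. e > 0 \<Longrightarrow> c - K * norm v + \<alpha>/2 * (norm v)\<^sup>2 \<le> Jeps p e F \<alpha> \<beta> v"
    using Jeps_coercive by blast
  have "c - K\<^sup>2 / (2 * \<alpha>) \<le> c - K * s + \<alpha>/2 * s\<^sup>2" for s
  proof -
    have "0 \<le> (\<alpha> * s - K)\<^sup>2" by simp
    hence "2 * \<alpha> * (K * s - \<alpha>/2 * s\<^sup>2) \<le> K\<^sup>2" by (simp add: power2_eq_square algebra_simps)
    thus ?thesis using \<alpha>_pos by (simp add: field_simps)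
  qed
  hence "c - K\<^sup>2 / (2 * \<alpha>) \<le> energy k" for k
    using J[OF \<epsilon>_pos[of k], of "u k"] unfolding energy_def by (meson order.trans)
  hence "\<alpha>/2 * (\<Sum>i<k. (norm (u (Suc i) - u i))\<^sup>2) \<le> energy 0 - (c - K\<^sup>2 / (2 * \<alpha>))" for k
    using energy_plus_steps_le[of k] by (smt (verit))
  hence "(\<Sum>i<k. (norm (u (Suc i) - u i))\<^sup>2) \<le> 2 / \<alpha> * (energy 0 - (c - K\<^sup>2 / (2 * \<alpha>)))" for k
    using \<alpha>_pos by (simp add: field_simps)
  hence "summable (\<lambda>i. (norm (u (Suc i) - u i))\<^sup>2)" by (intro summableI_nonneg_bounded) auto
  hence "(\<lambda>i. sqrt ((norm (u (Suc i) - u i))\<^sup>2)) \<longlonglongrightarrow> sqrt 0"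
    by (intro tendsto_real_sqrt summable_LIMSEQ_zero)
  thus ?thesis by simp
qed

lemma minimizers_bounded:
  "\<exists>R. \<forall>k L' w. L' \<ge> 0 \<longrightarrow> is_minimizer (Qobj \<Omega> \<iota> F F' \<alpha> \<beta> p (\<epsilon> k) (u k) L') w \<longrightarrow> norm w \<le> R"
proof -
  obtain R0 where R0: "\<And>k. norm (u k) \<le> R0" using iterates_bounded by blast
  obtain c K where K: "K \<ge> 0" "\<And>v. c - K * norm v \<le> F v" using F_lower_bound by blast
  obtain M where "lipschitz_on M (cball 0 R0) F'" using F'_lipschitz_on_bounded[of "cball 0 R0"] by auto
  hence F'_bound: "norm (F' (u k)) \<le> norm (F' 0) + M * R0" for k by (rule lipschitz_on_cball_norm_le[OF _ R0])
  define D where "D = norm (F' 0) + M * R0"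
  have D_nonneg: "0 \<le> D" using F'_bound[of 0] norm_ge_zero[of "F' (u 0)"] unfolding D_def by linarith
  define C where "C = energy 0 - c + K * R0 + D * R0"
  have "norm w \<le> 1 + 2 * \<bar>D\<bar> / (\<alpha>/2) + 2 * \<bar>C\<bar> / (\<alpha>/2)"
    if L': "L' \<ge> 0" and w: "is_minimizer (Qobj \<Omega> \<iota> F F' \<alpha> \<beta> p (\<epsilon> k) (u k) L') w" for k L' w
  proof -
    have "F (u k) + F' (u k) (w - u k) + \<alpha> / 2 * (norm w)\<^sup>2 \<le> Qobj \<Omega> \<iota> F F' \<alpha> \<beta> p (\<epsilon> k) (u k) L' w"
      by (rule Qobj_lower_bound[OF p_range \<epsilon>_pos L' \<beta>_pos])
    also have "\<dots> \<le> Qobj \<Omega> \<iota> F F' \<alpha> \<beta> p (\<epsilon> k) (u k) L' (u k)" using w unfolding is_minimizer_def by blast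
    also have "\<dots> = energy k" unfolding energy_def by (rule Qobj_center[OF p_range \<epsilon>_pos])
    also have "\<dots> \<le> energy 0" by (rule energy_le_initial)
    finally have A: "F (u k) + F' (u k) (w - u k) + \<alpha> / 2 * (norm w)\<^sup>2 \<le> energy 0" .
    have "K * norm (u k) \<le> K * R0" by (rule mult_left_mono[OF R0 K(1)])
    hence B: "c - K * R0 \<le> F (u k)" using K(2)[of "u k"] by linarith
    have "\<bar>F' (u k) (w - u k)\<bar> \<le> norm (F' (u k)) * norm (w - u k)"
      using norm_blinfun[of "F' (u k)" "w - u k"] by simp
    also have "\<dots> \<le> D * (norm w + R0)"
      using F'_bound[of k] norm_triangle_ineq4[of w "u k"] R0[of k] D_nonneg unfolding D_def
      by (intro mult_mono) auto
    finally have "\<alpha>/2 * (norm w)\<^sup>2 - D * norm w \<le> C" using A B unfolding C_def by (simp add: algebra_simps)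
    thus ?thesis using \<alpha>_pos by (intro quadratic_growth_bound) auto
  qed
  thus ?thesis by blast
qed

lemma L_bounded: "\<exists>Lmax. \<forall>k. L k \<le> Lmax"
proof -
  obtain R0 where R0: "\<And>k. norm (u k) \<le> R0" using iterates_bounded by blast
  obtain R1 where R1: "\<And>k L' w. L' \<ge> 0 \<Longrightarrow> is_minimizer (Qobj \<Omega> \<iota> F F' \<alpha> \<beta> p (\<epsilon> k) (u k) L') w \<Longrightarrow> norm w \<le> R1"
    using minimizers_bounded by blast
  obtain M where lip: "lipschitz_on M (cball 0 (max R0 R1)) F'"
    using F'_lipschitz_on_bounded[of "cball 0 (max R0 R1)"] by auto
  have Dcond_large: "Dcond F F' (u k) L' w" if "M \<le> L'" "norm w \<le> R1" for k L' w
  proof -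
    have "F w \<le> F (u k) + F' (u k) (w - u k) + M * (norm (w - u k))\<^sup>2"
      by (rule lipschitz_derivative_descent[OF F_derivative lip convex_cball]) (use R0[of k] that in auto)
    also have "M * (norm (w - u k))\<^sup>2 \<le> L' * (norm (w - u k))\<^sup>2" using that by (intro mult_right_mono) auto
    finally show ?thesis unfolding Dcond_def by simp
  qed
  have "L k \<le> \<gamma> * max Lt M" for k
  proof (rule ccontr)
    assume "\<not> L k \<le> \<gamma> * max Lt M"
    hence big: "\<gamma> * max Lt M < L k" by simp
    have "Lt < L k" using big \<gamma>_gt1 Lt_pos by (smt (verit) max.cobounded1 mult_le_cancel_right1)
    hence L': "L k / \<gamma> \<in> Lset Lt \<gamma>" by (rule Lset_divide[OF L_in_Lset _ Lt_pos])
    have "max Lt M * \<gamma> < L k" using big by (simp only: mult.commute)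
    hence "max Lt M < L k / \<gamma>" using \<gamma>_gt1 by (intro iffD2[OF pos_less_divide_eq]) auto
    hence M_le: "M \<le> L k / \<gamma>" and pos: "L k / \<gamma> > 0" using Lt_pos by auto
    have less: "L k / \<gamma> < L k" using pos \<gamma>_gt1 by (simp add: field_simps)
    obtain w where w: "is_minimizer (Qobj \<Omega> \<iota> F F' \<alpha> \<beta> p (\<epsilon> k) (u k) (L k / \<gamma>)) w"
      using Qobj_has_minimizer[OF p_range \<epsilon>_pos] pos \<alpha>_pos \<beta>_pos by (meson less_imp_le)
    have "Dcond F F' (u k) (L k / \<gamma>) w" using M_le R1[OF _ w] pos by (intro Dcond_large) auto
    thus False using L_minimal[OF L' less w] by blast
  qed
  thus ?thesis by blast
qed

lemma step_optimality:
  "2 * \<beta> * wquad (weight p (\<epsilon> k) (u k)) (u (Suc k))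
     = - F' (u k) (u (Suc k)) - L k * inner (u (Suc k) - u k) (u (Suc k)) - \<alpha> * inner (u (Suc k)) (u (Suc k))"
  using Qobj_minimizer(1)[OF p_range \<epsilon>_pos u_Suc_minimizer, of k "u (Suc k)"]
  unfolding Qderiv_def[OF p_range \<epsilon>_pos] wquad_def wform_def by linarith

end

context algorithmA_run
begin

lemma AE_convergent_subseq:
  assumes r: "strict_mono r" and wc: "weak_conv (u \<circ> r) ubar"
  obtains s where "strict_mono s" "weak_conv (u \<circ> s) ubar" "weak_conv (\<lambda>n. u (Suc (s n))) ubar"
    "AE x in M. (\<lambda>n. \<iota> (u (s n)) x) \<longlonglongrightarrow> \<iota> ubar x"
    "AE x in M. (\<lambda>n. \<iota> (u (Suc (s n))) x) \<longlonglongrightarrow> \<iota> ubar x"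
proof -
  obtain R where R: "\<And>k. norm (u k) \<le> R" using iterates_bounded by blast
  have "(\<lambda>n. norm (u (Suc (r n)) - (u \<circ> r) n)) \<longlonglongrightarrow> 0"
    using LIMSEQ_subseq_LIMSEQ[OF steps_tendsto_0 r] by (simp add: o_def)
  hence wc': "weak_conv (\<lambda>n. u (Suc (r n))) ubar" by (rule weak_conv_perturb[OF wc])
  have "bounded (range (u \<circ> r))" "bounded (range (\<lambda>n. u (Suc (r n))))"
    using R by (auto simp: bounded_iff)
  then obtain \<sigma> where \<sigma>: "strict_mono \<sigma>"
    "AE x in M. (\<lambda>n. \<iota> ((u \<circ> r) (\<sigma> n)) x) \<longlonglongrightarrow> \<iota> ubar x"
    "AE x in M. (\<lambda>n. \<iota> (u (Suc (r (\<sigma> n)))) x) \<longlonglongrightarrow> \<iota> ubar x"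
    using weak_conv_common_AE_subseq[OF wc wc'] by blast
  show thesis
  proof (rule that[of "r \<circ> \<sigma>"])
    show "strict_mono (r \<circ> \<sigma>)" using r \<sigma>(1) by (rule strict_mono_o)
    show "weak_conv (u \<circ> (r \<circ> \<sigma>)) ubar" using weak_conv_subseq[OF wc \<sigma>(1)] by (simp add: o_assoc)
    show "weak_conv (\<lambda>n. u (Suc ((r \<circ> \<sigma>) n))) ubar" using weak_conv_subseq[OF wc' \<sigma>(1)] by (simp add: o_def)
  qed (use \<sigma> in \<open>simp_all add: o_def\<close>)
qed

lemma step_rhs_tendsto:
  assumes s: "strict_mono s" and wa: "weak_conv (u \<circ> s) ubar" and wb: "weak_conv (\<lambda>n. u (Suc (s n))) ubar"
  shows "(\<lambda>n. F' (u (s n)) (u (Suc (s n))) + L (s n) * inner (u (Suc (s n)) - u (s n)) (u (Suc (s n)))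
            + \<alpha> * (2 * inner (u (Suc (s n))) ubar - inner ubar ubar))
         \<longlonglongrightarrow> F' ubar ubar + \<alpha> * inner ubar ubar"
proof -
  obtain R where R: "\<And>k. norm (u k) \<le> R" using iterates_bounded by blast
  obtain Lmax where Lmax: "\<And>k. L k \<le> Lmax" using L_bounded by blast
  have "(\<lambda>n. F' ((u \<circ> s) n)) \<longlonglongrightarrow> F' ubar" by (rule F'_completely_continuous[OF wa])
  hence t1: "(\<lambda>n. F' (u (s n)) (u (Suc (s n)))) \<longlonglongrightarrow> F' ubar ubar"
    using blinfun_tendsto_weak_conv[OF _ wb R] by (simp add: o_def)
  have t3: "(\<lambda>n. inner (u (Suc (s n))) ubar) \<longlonglongrightarrow> inner ubar ubar" using wb unfolding weak_conv_def by blast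
  have t2: "(\<lambda>n. L (s n) * inner (u (Suc (s n)) - u (s n)) (u (Suc (s n)))) \<longlonglongrightarrow> 0"
  proof (rule Lim_null_comparison[rotated])
    show "(\<lambda>n. Lmax * (norm (u (Suc (s n)) - u (s n)) * R)) \<longlonglongrightarrow> 0"
      using LIMSEQ_subseq_LIMSEQ[OF steps_tendsto_0 s]
      by (intro tendsto_mult_right_zero tendsto_mult_left_zero) (simp add: o_def)
    have "\<bar>L (s n) * inner (u (Suc (s n)) - u (s n)) (u (Suc (s n)))\<bar> \<le> Lmax * (norm (u (Suc (s n)) - u (s n)) * R)" for n
    proof -
      have "\<bar>inner (u (Suc (s n)) - u (s n)) (u (Suc (s n)))\<bar> \<le> norm (u (Suc (s n)) - u (s n)) * R"
        using Cauchy_Schwarz_ineq2 R mult_left_mono norm_ge_zero order_trans by metis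
      thus ?thesis using L_nonneg[of "s n"] Lmax[of "s n"] by (simp add: abs_mult mult_mono)
    qed
    thus "\<forall>\<^sub>F n in sequentially. norm (L (s n) * inner (u (Suc (s n)) - u (s n)) (u (Suc (s n))))
        \<le> Lmax * (norm (u (Suc (s n)) - u (s n)) * R)" by simp
  qed
  have "(\<lambda>n. \<alpha> * (2 * inner (u (Suc (s n))) ubar - inner ubar ubar)) \<longlonglongrightarrow> \<alpha> * (2 * inner ubar ubar - inner ubar ubar)"
    by (intro tendsto_mult_left tendsto_diff t3 tendsto_const)
  from tendsto_add[OF tendsto_add[OF t1 t2] this] show ?thesis by simp
qed

lemma limit_inequality:
  assumes "strict_mono r" and "weak_conv (u \<circ> r) ubar"
  shows "p * (LINT x|M. \<bar>\<iota> ubar x\<bar> powr p) \<le> - (F' ubar ubar + \<alpha> * inner ubar ubar) / \<beta>"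
proof -
  obtain s where s: "strict_mono s" "weak_conv (u \<circ> s) ubar" "weak_conv (\<lambda>n. u (Suc (s n))) ubar"
    "AE x in M. (\<lambda>n. \<iota> (u (s n)) x) \<longlonglongrightarrow> \<iota> ubar x"
    "AE x in M. (\<lambda>n. \<iota> (u (Suc (s n))) x) \<longlonglongrightarrow> \<iota> ubar x"
    using AE_convergent_subseq[OF assms] by blast
  define h where "h n x = 2 * weight p (\<epsilon> (s n)) (u (s n)) x * (\<iota> (u (Suc (s n))) x)\<^sup>2" for n x
  define U where "U n = - (F' (u (s n)) (u (Suc (s n))) + L (s n) * inner (u (Suc (s n)) - u (s n)) (u (Suc (s n)))
      + \<alpha> * (2 * inner (u (Suc (s n))) ubar - inner ubar ubar)) / \<beta>" for n
  have h_integrable: "integrable M (h n)" for n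
    using weight_mult_integrable[OF p_range \<epsilon>_pos] unfolding h_def power2_eq_square by (simp add: mult.assoc)
  have h_le_U: "(LINT x|M. h n x) \<le> U n" for n
  proof -
    let ?w = "u (Suc (s n))"
    have "\<beta> * (LINT x|M. h n x) = 2 * \<beta> * wquad (weight p (\<epsilon> (s n)) (u (s n))) ?w"
      unfolding h_def wquad_def power2_eq_square by (simp add: mult.assoc)
    also have "\<dots> = - F' (u (s n)) ?w - L (s n) * inner (?w - u (s n)) ?w - \<alpha> * inner ?w ?w"
      by (rule step_optimality)
    also have "\<dots> \<le> \<beta> * U n"
    proof -
      have "0 \<le> inner (?w - ubar) (?w - ubar)" by simp
      hence "2 * inner ?w ubar - inner ubar ubar \<le> inner ?w ?w"
        by (simp add: inner_diff_left inner_diff_right inner_commute)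
      thus ?thesis unfolding U_def using \<alpha>_pos \<beta>_pos by (simp add: mult_left_mono)
    qed
    finally show ?thesis using \<beta>_pos by simp
  qed
  have U_tendsto: "U \<longlonglongrightarrow> - (F' ubar ubar + \<alpha> * inner ubar ubar) / \<beta>"
    unfolding U_def by (intro tendsto_divide tendsto_minus step_rhs_tendsto[OF s(1-3)] tendsto_const) (use \<beta>_pos in simp)
  have \<epsilon>_s: "(\<lambda>n. \<epsilon> (s n)) \<longlonglongrightarrow> 0" using LIMSEQ_subseq_LIMSEQ[OF \<epsilon>_tendsto s(1)] by (simp add: o_def)
  have liminf: "AE x in M. ennreal (p * \<bar>\<iota> ubar x\<bar> powr p) \<le> liminf (\<lambda>n. ennreal (h n x))"
    using s(4,5)
  proof eventually_elim
    case (elim x)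
    show ?case unfolding h_def weight_def
      by (rule dpsi_weighted_square_liminf[OF elim \<epsilon>_s])
  qed
  have g_integrable: "integrable M (\<lambda>x. p * \<bar>\<iota> ubar x\<bar> powr p)"
    using abs_iota_powr_integrable[OF p_range] by simp
  have h_meas: "h n \<in> borel_measurable M" for n unfolding h_def by measurable
  have h_nonneg: "0 \<le> h n x" for n x
    unfolding h_def using weight_nonneg[OF p_range \<epsilon>_pos] by simp
  have "(LINT x|M. p * \<bar>\<iota> ubar x\<bar> powr p) \<le> - (F' ubar ubar + \<alpha> * inner ubar ubar) / \<beta>"
    using p_range by (intro Fatou_integral_le_lim[OF h_meas h_integrable h_nonneg g_integrable _ liminf h_le_U U_tendsto]) simp
  thus ?thesis by simp
qed

end

theorem theorem7p8:
  fixes \<Omega> :: "'d::euclidean_space set"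
    and \<iota> :: "'v::{real_inner,complete_space} \<Rightarrow> 'd \<Rightarrow> real"
    and F :: "'v \<Rightarrow> real" and F' :: "'v \<Rightarrow> ('v \<Rightarrow>\<^sub>L real)"
    and \<alpha> \<beta> p \<gamma> Lt :: real and \<epsilon> :: "nat \<Rightarrow> real" and u0 :: 'v
    and L :: "nat \<Rightarrow> real" and u :: "nat \<Rightarrow> 'v" and r :: "nat \<Rightarrow> nat" and ubar :: 'v
  assumes dom: "lipschitz_domain \<Omega>" "bounded \<Omega>"
    and emb: "compact_dense_embedding \<Omega> \<iota>"
    and AI: "assumption_I_F F F'"
    and params: "\<alpha> > 0" "\<beta> > 0" "0 < p" "p < 1"
    and eps: "decseq \<epsilon>" "\<forall>k. \<epsilon> k > 0" "\<epsilon> \<longlonglongrightarrow> 0"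
    and gam: "\<gamma> > 1" and Lt: "Lt > 0"
    and alg: "algorithmA \<Omega> \<iota> F F' \<alpha> \<beta> p \<epsilon> \<gamma> Lt u0 L u"
    and sub: "strict_mono r" "weak_conv (u \<circ> r) ubar"
  shows "\<exists>lam :: 'v \<Rightarrow>\<^sub>L real.
           (\<forall>v. \<alpha> * inner ubar v + \<beta> * lam v = - F' ubar v) \<and>
           lam ubar \<ge> p * (LINT x|lebesgue_on \<Omega>. \<bar>\<iota> ubar x\<bar> powr p)"
proof -
  have "open \<Omega>" using dom(1) unfolding lipschitz_domain_def by blast
  hence "finite_measure (lebesgue_on \<Omega>)" by (intro finite_measure_lebesgue_on lmeasurable_open dom(2))
  then interpret algorithmA_run \<Omega> \<iota> F F' \<alpha> \<beta> p \<gamma> Lt \<epsilon> u0 L u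
    by (rule algorithmA_run.intro[OF L2_embedding.intro[OF _ emb] algorithmA_run_axioms.intro])
      (use AI params eps gam Lt alg in auto)
  define lam where "lam = (- (1 / \<beta>)) *\<^sub>R (F' ubar + \<alpha> *\<^sub>R blinfun_inner_left ubar)"
  have lam: "lam v = - (F' ubar v + \<alpha> * inner ubar v) / \<beta>" for v
    unfolding lam_def using params(2) by (simp add: blinfun.bilinear_simps inner_commute field_simps)
  show ?thesis
  proof (intro exI conjI allI)
    show "\<alpha> * inner ubar v + \<beta> * lam v = - F' ubar v" for v
      unfolding lam using params by simp
    show "lam ubar \<ge> p * (LINT x|lebesgue_on \<Omega>. \<bar>\<iota> ubar x\<bar> powr p)"
      unfolding lam using limit_inequality[OF sub] by simp
  qed
qed
end
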